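(* Assume that for every $i=1,\dots,N$, $R_i(\cdot)^{-1}$ and $(R_i(\cdot)+\bar R_i(\cdot))^{-1}$ exist and are bounded, and that there is $\delta>0$ with $D_0(s)D_0(s)^\top\ge\delta I_n$ and $\widehat D_0(s)\widehat D_0(s)^\top\ge\delta I_n$ for a.e. $s\in[0,T]$. Then: (i) If $(u_0,\theta)\in L^2_{\mathbb F}(0,T;\mathbb R^{m_0})\times\Theta$ satisfies the MF-GBCS, then, setting $$q=C(x^*-\mathbb E[x^*])+D^y_{-0}(y_{-0}-\mathbb E[y_{-0}])+D^z_{-0}(z_{-0}-\mathbb E[z_{-0}])+D_0(u_0-\mathbb E[u_0])+\widehat C\mathbb E[x^*]+\widehat D^y_{-0}\mathbb E[y_{-0}]+\widehat D^z_{-0}\mathbb E[z_{-0}]+\widehat D_0\mathbb E[u_0],\quad v=u_0,$$ the pair $(v,\pi)$ with $\pi=(y,z)$, $y=(x^{*\top},y_{-0}^\top)^\top$, $z=(q^\top,z_{-0}^\top)^\top$, belongs to $L^2_{\mathbb F}(0,T;\mathbb R^{m_0})\times\Pi$ and satisfies the backward system. (ii) If $(v,\pi)\in L^2_{\mathbb F}(0,T;\mathbb R^{m_0})\times\Pi$, $\pi=((x^{*\top},y_{-0}^\top)^\top,(q^\top,z_{-0}^\top)^\top)$, satisfies the backward system, then, setting $$u_0=D_0^\top(D_0D_0^\top)^{-1}\{(q-\mathbb E[q])-C(x^*-\mathbb E[x^*])-D^y_{-0}(y_{-0}-\mathbb E[y_{-0}])-D^z_{-0}(z_{-0}-\mathbb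 E[z_{-0}])\}+[I-D_0^\top(D_0D_0^\top)^{-1}D_0](v-\mathbb E[v])$$ $$\qquad+\widehat D_0^\top(\widehat D_0\widehat D_0^\top)^{-1}\{\mathbb E[q]-\widehat C\mathbb E[x^*]-\widehat D^y_{-0}\mathbb E[y_{-0}]-\widehat D^z_{-0}\mathbb E[z_{-0}]\}+[I-\widehat D_0^\top(\widehat D_0\widehat D_0^\top)^{-1}\widehat D_0]\mathbb E[v],$$ the pair $(u_0,\theta)$ with $\theta=(x^*,y_{-0},z_{-0})$ belongs to $L^2_{\mathbb F}(0,T;\mathbb R^{m_0})\times\Theta$ and satisfies the MF-GBCS.
   Context: Let $T>0$ and let $(\Omega,\mathcal F,\mathbb F,\mathbb P)$ be a complete filtered probability space carrying a one-dimensional standard Brownian motion $W(\cdot)$, with $\mathbb F$ the natural filtration of $W$ augmented by the $\mathbb P$-null sets. $L^2_{\mathbb F}(0,T;\mathbb R^k)$: $\mathbb F$-progressively measurable processes with $\mathbb E\int_0^T|\varphi|^2ds<\infty$; $L^2_{\mathbb F}(\Omega;C(0,T;\mathbb R^k))$: $\mathbb F$-progressively measurable continuous processes with $\mathbb E\sup_s|\varphi(s)|^2<\infty$; $L^\infty(0,T;\cdot)$: bounded measurable deterministic functions; $\mathbb S^k$: symmetric $k\times k$ matrices. Time arguments are suppressed. Let $n,N\ge1$, $m_0,\dots,m_N\ge1$, $m_{-0}=m_1+\dots+m_N$. Coefficients: $A,\bar A,C,\bar C\in L^\infty(0,T;\mathbb R^{n\times n})$; for $i=0,\dots,N$, $B_i,\bar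 B_i,D_i,\bar D_i\in L^\infty(0,T;\mathbb R^{n\times m_i})$; $B_{-0}=(B_1,\dots,B_N)$, similarly $\bar B_{-0},D_{-0},\bar D_{-0}$. For $i=1,\dots,N$: $H_i,\bar H_i\in\mathbb S^n$, $Q_i,\bar Q_i\in L^\infty(0,T;\mathbb S^n)$, $R_i,\bar R_i\in L^\infty(0,T;\mathbb S^{m_i})$. $\widetilde A,\bar{\widetilde A},\widetilde C,\bar{\widetilde C}$ are block-diagonal with $N$ copies of $A,\bar A,C,\bar C$; $\widetilde B_{-0}=\mathrm{diag}(B_1,\dots,B_N)$, $\bar{\widetilde B}_{-0}=\mathrm{diag}(\bar B_1,\dots,\bar B_N)$, $\widetilde D_{-0}=\mathrm{diag}(D_1,\dots,D_N)$, $\bar{\widetilde D}_{-0}=\mathrm{diag}(\bar D_1,\dots,\bar D_N)$; $R=\mathrm{diag}(R_1,\dots,R_N)$, $\bar R=\mathrm{diag}(\bar R_1,\dots,\bar R_N)$; $Q=(Q_1^\top,\dots,Q_N^\top)^\top$, and $\bar Q,H,\bar H$ similarly. Define $B^y_{-0}=-B_{-0}R^{-1}\widetilde B_{-0}^\top$, $\bar B^y_{-0}=B_{-0}R^{-1}\widetilde B_{-0}^\top-(B_{-0}+\bar B_{-0})(R+\bar R)^{-1}(\widetilde B_{-0}+\bar{\widetilde B}_{-0})^\top$, $B^z_{-0}=-B_{-0}R^{-1}\widetilde D_{-0}^\top$, $\bar B^z_{-0}=B_{-0}R^{-1}\widetilde D_{-0}^\top-(B_{-0}+\bar B_{-0})(R+\bar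 R)^{-1}(\widetilde D_{-0}+\bar{\widetilde D}_{-0})^\top$, and $D^y_{-0},\bar D^y_{-0},D^z_{-0},\bar D^z_{-0}$ by the same formulas with the leading $B_{-0}$, $B_{-0}+\bar B_{-0}$ replaced by $D_{-0}$, $D_{-0}+\bar D_{-0}$. Hat convention: for any matrices $M,\bar M$ of equal size, $\widehat M:=M+\bar M$ (e.g. $\widehat C=C+\bar C$, $\widehat D_0=D_0+\bar D_0$, $\widehat D^y_{-0}=D^y_{-0}+\bar D^y_{-0}$); conversely, when $M$ and $\widehat M$ are defined, $\bar M:=\widehat M-M$. $\Theta:=L^2_{\mathbb F}(\Omega;C(0,T;\mathbb R^n))\times L^2_{\mathbb F}(\Omega;C(0,T;\mathbb R^{Nn}))\times L^2_{\mathbb F}(0,T;\mathbb R^{Nn})$. The MF-GBCS is the system, for $u_0\in L^2_{\mathbb F}(0,T;\mathbb R^{m_0})$ and $\theta=(x^*,y_{-0},z_{-0})\in\Theta$: $dx^*=\{Ax^*+\bar A\mathbb E[x^*]+B^y_{-0}y_{-0}+\bar B^y_{-0}\mathbb E[y_{-0}]+B^z_{-0}z_{-0}+\bar B^z_{-0}\mathbb E[z_{-0}]+B_0u_0+\bar B_0\mathbb E[u_0]\}ds+\{Cx^*+\bar C\mathbb E[x^*]+D^y_{-0}y_{-0}+\bar D^y_{-0}\mathbb E[y_{-0}]+D^z_{-0}z_{-0}+\bar D^z_{-0}\mathbb E[z_{-0}]+D_0u_0+\bar D_0\mathbb E[u_0]\}dW$, $dy_{-0}=-\{Qx^*+\bar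 Q\mathbb E[x^*]+\widetilde A^\top y_{-0}+\bar{\widetilde A}^\top\mathbb E[y_{-0}]+\widetilde C^\top z_{-0}+\bar{\widetilde C}^\top\mathbb E[z_{-0}]\}ds+z_{-0}dW$, $y_{-0}(T)=Hx^*(T)+\bar H\mathbb E[x^*(T)]$. Backward system coefficients: $\mathbf A_1=A-B_0D_0^\top(D_0D_0^\top)^{-1}C$, $\widehat{\mathbf A}_1=\widehat A-\widehat B_0\widehat D_0^\top(\widehat D_0\widehat D_0^\top)^{-1}\widehat C$; $\mathbf A_2=B^y_{-0}-B_0D_0^\top(D_0D_0^\top)^{-1}D^y_{-0}$, $\widehat{\mathbf A}_2=\widehat B^y_{-0}-\widehat B_0\widehat D_0^\top(\widehat D_0\widehat D_0^\top)^{-1}\widehat D^y_{-0}$; $\mathbf C_1=B_0D_0^\top(D_0D_0^\top)^{-1}$, $\widehat{\mathbf C}_1=\widehat B_0\widehat D_0^\top(\widehat D_0\widehat D_0^\top)^{-1}$; $\mathbf C_2=B^z_{-0}-B_0D_0^\top(D_0D_0^\top)^{-1}D^z_{-0}$, $\widehat{\mathbf C}_2=\widehat B^z_{-0}-\widehat B_0\widehat D_0^\top(\widehat D_0\widehat D_0^\top)^{-1}\widehat D^z_{-0}$; $\mathbf B_1=B_0[I-D_0^\top(D_0D_0^\top)^{-1}D_0]$, $\widehat{\mathbf B}_1=\widehat B_0[I-\widehat D_0^\top(\widehat D_0\widehat D_0^\top)^{-1}\widehat D_0]$; bars by $\bar{\mathbf A}_1=\widehat{\mathbf A}_1-\mathbf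 A_1$ etc. Then $\mathbf A=\begin{pmatrix}\mathbf A_1&\mathbf A_2\\-Q&-\widetilde A^\top\end{pmatrix}$, $\mathbf C=\begin{pmatrix}\mathbf C_1&\mathbf C_2\\0&-\widetilde C^\top\end{pmatrix}$, $\mathbf B=\begin{pmatrix}\mathbf B_1\\0\end{pmatrix}$, $\bar{\mathbf A}=\begin{pmatrix}\bar{\mathbf A}_1&\bar{\mathbf A}_2\\-\bar Q&-\bar{\widetilde A}^\top\end{pmatrix}$, $\bar{\mathbf C}=\begin{pmatrix}\bar{\mathbf C}_1&\bar{\mathbf C}_2\\0&-\bar{\widetilde C}^\top\end{pmatrix}$, $\bar{\mathbf B}=\begin{pmatrix}\bar{\mathbf B}_1\\0\end{pmatrix}$. $\Pi:=L^2_{\mathbb F}(\Omega;C(0,T;\mathbb R^{(1+N)n}))\times L^2_{\mathbb F}(0,T;\mathbb R^{(1+N)n})$. The backward system, for $v\in L^2_{\mathbb F}(0,T;\mathbb R^{m_0})$ and $\pi=(y,z)\in\Pi$ with $y=(x^{*\top},y_{-0}^\top)^\top$, $z=(q^\top,z_{-0}^\top)^\top$ ($x^*,q$ $\mathbb R^n$-valued, $y_{-0},z_{-0}$ $\mathbb R^{Nn}$-valued), is $dy=\{\mathbf Ay+\bar{\mathbf A}\mathbb E[y]+\mathbf Cz+\bar{\mathbf C}\mathbb E[z]+\mathbf Bv+\bar{\mathbf B}\mathbb E[v]\}ds+z\,dW$, $s\in[0,T]$, $y_{-0}(T)=Hx^*(T)+\bar H\mathbb E[x^*(T)]$. *)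

theory Defs
  imports "HOL-Probability.Probability"
begin

definition brownian :: "'a measure \<Rightarrow> (real \<Rightarrow> 'a \<Rightarrow> real) \<Rightarrow> bool" where
  "brownian M W \<longleftrightarrow> prob_space M \<and>
     (\<forall>t. W t \<in> borel_measurable M) \<and>
     (\<forall>\<omega>\<in>space M. W 0 \<omega> = 0 \<and> continuous_on {0..} (\<lambda>t. W t \<omega>)) \<and>
     (\<forall>s t. 0 \<le> s \<and> s < t \<longrightarrow>
        distributed M lborel (\<lambda>\<omega>. W t \<omega> - W s \<omega>)
          (\<lambda>x. ennreal (normal_density 0 (sqrt (t - s)) x))) \<and>
     (\<forall>(k::nat) (tp::nat \<Rightarrow> real). tp 0 = 0 \<and> (\<forall>j<k. tp j < tp (Suc j)) \<longrightarrow>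
        prob_space.indep_vars M (\<lambda>_. borel) (\<lambda>j \<omega>. W (tp (Suc j)) \<omega> - W (tp j) \<omega>) {..<k})"

definition Fnat :: "'a measure \<Rightarrow> (real \<Rightarrow> 'a \<Rightarrow> real) \<Rightarrow> real \<Rightarrow> 'a measure" where
  "Fnat M W t = sigma (space M)
     ((\<Union>s\<in>{0..t}. {W s -` B \<inter> space M | B. B \<in> sets borel}) \<union> null_sets M)"

definition progressive :: "'a measure \<Rightarrow> (real \<Rightarrow> 'a measure) \<Rightarrow> real
    \<Rightarrow> (real \<Rightarrow> 'a \<Rightarrow> 'v::euclidean_space) \<Rightarrow> bool" where
  "progressive M F T \<phi> \<longleftrightarrow> (\<forall>t\<in>{0..T}.
     (\<lambda>(s,\<omega>). \<phi> s \<omega>) \<in> borel_measurable (restrict_space borel {0..t} \<Otimes>\<^sub>M F t))"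

definition L2F :: "'a measure \<Rightarrow> (real \<Rightarrow> 'a measure) \<Rightarrow> real
    \<Rightarrow> (real \<Rightarrow> 'a \<Rightarrow> 'v::euclidean_space) \<Rightarrow> bool" where
  "L2F M F T \<phi> \<longleftrightarrow> progressive M F T \<phi> \<and>
     (\<integral>\<^sup>+\<omega>. (\<integral>\<^sup>+s. ennreal ((norm (\<phi> s \<omega>))\<^sup>2) * indicator {0..T} s \<partial>lborel) \<partial>M) < \<infinity>"

definition L2FC :: "'a measure \<Rightarrow> (real \<Rightarrow> 'a measure) \<Rightarrow> real
    \<Rightarrow> (real \<Rightarrow> 'a \<Rightarrow> 'v::euclidean_space) \<Rightarrow> bool" where
  "L2FC M F T \<phi> \<longleftrightarrow> progressive M F T \<phi> \<and>
     (\<forall>\<omega>\<in>space M. continuous_on {0..T} (\<lambda>s. \<phi> s \<omega>)) \<and>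
     (\<integral>\<^sup>+\<omega>. (SUP s\<in>{0..T}. ennreal ((norm (\<phi> s \<omega>))\<^sup>2)) \<partial>M) < \<infinity>"

definition simp_ok :: "'a measure \<Rightarrow> (real \<Rightarrow> 'a measure) \<Rightarrow> real \<Rightarrow> nat
    \<Rightarrow> (nat \<Rightarrow> real) \<Rightarrow> (nat \<Rightarrow> 'a \<Rightarrow> real) \<Rightarrow> bool" where
  "simp_ok M F T K tp \<xi> \<longleftrightarrow> tp 0 = 0 \<and> tp K = T \<and> (\<forall>j<K. tp j < tp (Suc j)) \<and>
     (\<forall>j<K. \<xi> j \<in> borel_measurable (F (tp j)) \<and> integrable M (\<lambda>\<omega>. (\<xi> j \<omega>)\<^sup>2))"

definition simp_proc :: "nat \<Rightarrow> (nat \<Rightarrow> real) \<Rightarrow> (nat \<Rightarrow> 'a \<Rightarrow> real) \<Rightarrow> real \<Rightarrow> 'a \<Rightarrow> real" where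
  "simp_proc K tp \<xi> = (\<lambda>s \<omega>. \<Sum>j<K. \<xi> j \<omega> * indicator {tp j<..tp (Suc j)} s)"

definition simp_int :: "(real \<Rightarrow> 'a \<Rightarrow> real) \<Rightarrow> nat \<Rightarrow> (nat \<Rightarrow> real) \<Rightarrow> (nat \<Rightarrow> 'a \<Rightarrow> real)
    \<Rightarrow> real \<Rightarrow> 'a \<Rightarrow> real" where
  "simp_int W K tp \<xi> t = (\<lambda>\<omega>. \<Sum>j<K. \<xi> j \<omega> * (W (min t (tp (Suc j))) \<omega> - W (min t (tp j)) \<omega>))"

definition ito_int :: "'a measure \<Rightarrow> (real \<Rightarrow> 'a measure) \<Rightarrow> (real \<Rightarrow> 'a \<Rightarrow> real) \<Rightarrow> real
    \<Rightarrow> (real \<Rightarrow> 'a \<Rightarrow> real) \<Rightarrow> real \<Rightarrow> ('a \<Rightarrow> real) \<Rightarrow> bool" where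
  "ito_int M F W T \<sigma> t Y \<longleftrightarrow> Y \<in> borel_measurable M \<and>
     (\<exists>(K::nat \<Rightarrow> nat) (tp::nat \<Rightarrow> nat \<Rightarrow> real) (\<xi>::nat \<Rightarrow> nat \<Rightarrow> 'a \<Rightarrow> real).
        (\<forall>k. simp_ok M F T (K k) (tp k) (\<xi> k)) \<and>
        ((\<lambda>k. \<integral>\<^sup>+\<omega>. (\<integral>\<^sup>+s. ennreal ((\<sigma> s \<omega> - simp_proc (K k) (tp k) (\<xi> k) s \<omega>)\<^sup>2)
                 * indicator {0..T} s \<partial>lborel) \<partial>M) \<longlonglongrightarrow> 0) \<and>
        ((\<lambda>k. \<integral>\<^sup>+\<omega>. ennreal ((Y \<omega> - simp_int W (K k) (tp k) (\<xi> k) t \<omega>)\<^sup>2) \<partial>M) \<longlonglongrightarrow> 0))"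

definition vito :: "'a measure \<Rightarrow> (real \<Rightarrow> 'a measure) \<Rightarrow> (real \<Rightarrow> 'a \<Rightarrow> real) \<Rightarrow> real
    \<Rightarrow> (real \<Rightarrow> 'a \<Rightarrow> real^'d) \<Rightarrow> real \<Rightarrow> ('a \<Rightarrow> real^'d) \<Rightarrow> bool" where
  "vito M F W T \<sigma> t Y \<longleftrightarrow> (\<forall>i. ito_int M F W T (\<lambda>s \<omega>. \<sigma> s \<omega> $ i) t (\<lambda>\<omega>. Y \<omega> $ i))"

definition sde :: "'a measure \<Rightarrow> (real \<Rightarrow> 'a \<Rightarrow> real) \<Rightarrow> real \<Rightarrow> (real \<Rightarrow> 'a \<Rightarrow> real^'d)
    \<Rightarrow> (real \<Rightarrow> 'a \<Rightarrow> real^'d) \<Rightarrow> (real \<Rightarrow> 'a \<Rightarrow> real^'d) \<Rightarrow> bool" where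
  "sde M W T X b \<sigma> \<longleftrightarrow> (\<forall>t\<in>{0..T}.
     (AE \<omega> in M. set_integrable lborel {0..t} (\<lambda>s. b s \<omega>)) \<and>
     (\<exists>Y. vito M (Fnat M W) W T \<sigma> t Y \<and>
        (AE \<omega> in M. X t \<omega> = X 0 \<omega> + (LINT s:{0..t}|lborel. b s \<omega>) + Y \<omega>)))"

definition mexp :: "'a measure \<Rightarrow> (real \<Rightarrow> 'a \<Rightarrow> 'v::{banach,second_countable_topology}) \<Rightarrow> real \<Rightarrow> 'v" where
  "mexp M x s = (LINT \<omega>|M. x s \<omega>)"

definition linf :: "real \<Rightarrow> (real \<Rightarrow> 'v::euclidean_space) \<Rightarrow> bool" where
  "linf T f \<longleftrightarrow> f \<in> borel_measurable (restrict_space borel {0..T}) \<and> bounded (f ` {0..T})"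

text \<open>Block-diagonal diag(X_1,...,X_N) where the columns of X belonging to player i form X_i.\<close>
definition bdiag :: "('m::finite \<Rightarrow> 'p::finite) \<Rightarrow> real^'m^'n::finite \<Rightarrow> real^'m^('p \<times> 'n)" where
  "bdiag own X = (\<chi> r j. if own j = fst r then X $ snd r $ j else 0)"

definition cdiag :: "real^'n::finite^'n \<Rightarrow> real^('p::finite \<times> 'n)^('p \<times> 'n)" where
  "cdiag X = (\<chi> r c. if fst r = fst c then X $ snd r $ snd c else 0)"

definition blk2 :: "real^'c1::finite^'r1::finite \<Rightarrow> real^'c2::finite^'r1 \<Rightarrow> real^'c1^'r2::finite \<Rightarrow> real^'c2^'r2
    \<Rightarrow> real^('c1 + 'c2)^('r1 + 'r2)" where
  "blk2 P Q R S = (\<chi> r c. case r of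
      Inl i \<Rightarrow> (case c of Inl j \<Rightarrow> P $ i $ j | Inr j \<Rightarrow> Q $ i $ j)
    | Inr i \<Rightarrow> (case c of Inl j \<Rightarrow> R $ i $ j | Inr j \<Rightarrow> S $ i $ j))"

definition vstack :: "real^'c::finite^'r1::finite \<Rightarrow> real^'c^'r2::finite \<Rightarrow> real^'c^('r1 + 'r2)" where
  "vstack P Q = (\<chi> r. case r of Inl i \<Rightarrow> P $ i | Inr i \<Rightarrow> Q $ i)"

definition stack :: "real^'a::finite \<Rightarrow> real^'b::finite \<Rightarrow> real^('a + 'b)" where
  "stack x y = (\<chi> r. case r of Inl i \<Rightarrow> x $ i | Inr i \<Rightarrow> y $ i)"

definition vtop :: "real^('a::finite + 'b::finite) \<Rightarrow> real^'a" where "vtop v = (\<chi> i. v $ Inl i)"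
definition vbot :: "real^('a::finite + 'b::finite) \<Rightarrow> real^'b" where "vbot v = (\<chi> i. v $ Inr i)"

text \<open>'n: state index (R^n); 'k: leader control index (R^{m_0}); 'm: stacked follower
  control index (R^{m_{-0}}), with own j the player owning coordinate j; 'p: players 1..N.
  Stacked quantities R^{Nn} are indexed by 'p \<times> 'n.\<close>
record ('n::finite, 'k::finite, 'm::finite, 'p::finite) coef =
  cA :: "real \<Rightarrow> real^'n^'n"
  cAb :: "real \<Rightarrow> real^'n^'n"
  cC :: "real \<Rightarrow> real^'n^'n"
  cCb :: "real \<Rightarrow> real^'n^'n"
  cB0 :: "real \<Rightarrow> real^'k^'n"
  cB0b :: "real \<Rightarrow> real^'k^'n"
  cD0 :: "real \<Rightarrow> real^'k^'n"
  cD0b :: "real \<Rightarrow> real^'k^'n"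
  cBm :: "real \<Rightarrow> real^'m^'n"
  cBmb :: "real \<Rightarrow> real^'m^'n"
  cDm :: "real \<Rightarrow> real^'m^'n"
  cDmb :: "real \<Rightarrow> real^'m^'n"
  cown :: "'m \<Rightarrow> 'p"
  cR :: "real \<Rightarrow> real^'m^'m"
  cRb :: "real \<Rightarrow> real^'m^'m"
  cQ :: "real \<Rightarrow> real^'n^('p \<times> 'n)"
  cQb :: "real \<Rightarrow> real^'n^('p \<times> 'n)"
  cH :: "real^'n^('p \<times> 'n)"
  cHb :: "real^'n^('p \<times> 'n)"

definition blocksym :: "real^'n::finite^('p::finite \<times> 'n) \<Rightarrow> bool" where
  "blocksym X \<longleftrightarrow> (\<forall>i k l. X $ (i,k) $ l = X $ (i,l) $ k)"

definition blockdiag_sym :: "('m::finite \<Rightarrow> 'p) \<Rightarrow> real^'m^'m \<Rightarrow> bool" where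
  "blockdiag_sym own X \<longleftrightarrow> transpose X = X \<and> (\<forall>j l. own j \<noteq> own l \<longrightarrow> X $ j $ l = 0)"

text \<open>Standing assumptions on the coefficients: membership in the stated L^infty spaces,
  symmetry, R = diag(R_1,...,R_N), every m_i \<ge> 1.\<close>
definition coef_ok :: "('n::finite, 'k::finite, 'm::finite, 'p::finite) coef \<Rightarrow> real \<Rightarrow> bool" where
  "coef_ok c T \<longleftrightarrow>
     linf T (cA c) \<and> linf T (cAb c) \<and> linf T (cC c) \<and> linf T (cCb c) \<and>
     linf T (cB0 c) \<and> linf T (cB0b c) \<and> linf T (cD0 c) \<and> linf T (cD0b c) \<and>
     linf T (cBm c) \<and> linf T (cBmb c) \<and> linf T (cDm c) \<and> linf T (cDmb c) \<and>
     linf T (cR c) \<and> linf T (cRb c) \<and> linf T (cQ c) \<and> linf T (cQb c) \<and>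
     surj (cown c) \<and>
     (\<forall>s. blockdiag_sym (cown c) (cR c s) \<and> blockdiag_sym (cown c) (cRb c s)) \<and>
     (\<forall>s. blocksym (cQ c s) \<and> blocksym (cQb c s)) \<and> blocksym (cH c) \<and> blocksym (cHb c)"

definition cm :: "real^'m^'n \<Rightarrow> real^'m^'m \<Rightarrow> real^'m^'r \<Rightarrow> real^'r^'n" where
  "cm L R X = - (L ** matrix_inv R ** transpose X)"

definition cmb :: "real^'m^'n \<Rightarrow> real^'m^'n \<Rightarrow> real^'m^'m \<Rightarrow> real^'m^'m
    \<Rightarrow> real^'m^'r \<Rightarrow> real^'m^'r \<Rightarrow> real^'r^'n" where
  "cmb L Lb R Rb X Xb = L ** matrix_inv R ** transpose X
      - (L + Lb) ** matrix_inv (R + Rb) ** transpose (X + Xb)"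

definition By :: "('n::finite, 'k::finite, 'm::finite, 'p::finite) coef \<Rightarrow> real \<Rightarrow> real^('p\<times>'n)^'n" where
  "By c s = cm (cBm c s) (cR c s) (bdiag (cown c) (cBm c s))"
definition Byb :: "('n::finite, 'k::finite, 'm::finite, 'p::finite) coef \<Rightarrow> real \<Rightarrow> real^('p\<times>'n)^'n" where
  "Byb c s = cmb (cBm c s) (cBmb c s) (cR c s) (cRb c s)
              (bdiag (cown c) (cBm c s)) (bdiag (cown c) (cBmb c s))"
definition Bz :: "('n::finite, 'k::finite, 'm::finite, 'p::finite) coef \<Rightarrow> real \<Rightarrow> real^('p\<times>'n)^'n" where
  "Bz c s = cm (cBm c s) (cR c s) (bdiag (cown c) (cDm c s))"
definition Bzb :: "('n::finite, 'k::finite, 'm::finite, 'p::finite) coef \<Rightarrow> real \<Rightarrow> real^('p\<times>'n)^'n" where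
  "Bzb c s = cmb (cBm c s) (cBmb c s) (cR c s) (cRb c s)
              (bdiag (cown c) (cDm c s)) (bdiag (cown c) (cDmb c s))"
definition Dy :: "('n::finite, 'k::finite, 'm::finite, 'p::finite) coef \<Rightarrow> real \<Rightarrow> real^('p\<times>'n)^'n" where
  "Dy c s = cm (cDm c s) (cR c s) (bdiag (cown c) (cBm c s))"
definition Dyb :: "('n::finite, 'k::finite, 'm::finite, 'p::finite) coef \<Rightarrow> real \<Rightarrow> real^('p\<times>'n)^'n" where
  "Dyb c s = cmb (cDm c s) (cDmb c s) (cR c s) (cRb c s)
              (bdiag (cown c) (cBm c s)) (bdiag (cown c) (cBmb c s))"
definition Dz :: "('n::finite, 'k::finite, 'm::finite, 'p::finite) coef \<Rightarrow> real \<Rightarrow> real^('p\<times>'n)^'n" where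
  "Dz c s = cm (cDm c s) (cR c s) (bdiag (cown c) (cDm c s))"
definition Dzb :: "('n::finite, 'k::finite, 'm::finite, 'p::finite) coef \<Rightarrow> real \<Rightarrow> real^('p\<times>'n)^'n" where
  "Dzb c s = cmb (cDm c s) (cDmb c s) (cR c s) (cRb c s)
              (bdiag (cown c) (cDm c s)) (bdiag (cown c) (cDmb c s))"

definition "Ah c s = cA c s + cAb c s"
definition "Ch c s = cC c s + cCb c s"
definition "B0h c s = cB0 c s + cB0b c s"
definition "D0h c s = cD0 c s + cD0b c s"
definition "Byh c s = By c s + Byb c s"
definition "Bzh c s = Bz c s + Bzb c s"
definition "Dyh c s = Dy c s + Dyb c s"
definition "Dzh c s = Dz c s + Dzb c s"

definition gdrift where
  "gdrift c M x y z u s \<omega> =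
     cA c s *v x s \<omega> + cAb c s *v mexp M x s + By c s *v y s \<omega> + Byb c s *v mexp M y s
     + Bz c s *v z s \<omega> + Bzb c s *v mexp M z s + cB0 c s *v u s \<omega> + cB0b c s *v mexp M u s"

definition gdiff where
  "gdiff c M x y z u s \<omega> =
     cC c s *v x s \<omega> + cCb c s *v mexp M x s + Dy c s *v y s \<omega> + Dyb c s *v mexp M y s
     + Dz c s *v z s \<omega> + Dzb c s *v mexp M z s + cD0 c s *v u s \<omega> + cD0b c s *v mexp M u s"

definition ydrift where
  "ydrift c M x y z s \<omega> = - (cQ c s *v x s \<omega> + cQb c s *v mexp M x s
     + transpose (cdiag (cA c s)) *v y s \<omega> + transpose (cdiag (cAb c s)) *v mexp M y s
     + transpose (cdiag (cC c s)) *v z s \<omega> + transpose (cdiag (cCb c s)) *v mexp M z s)"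

definition mfgbcs :: "('n::finite, 'k::finite, 'm::finite, 'p::finite) coef \<Rightarrow> 'a measure
    \<Rightarrow> (real \<Rightarrow> 'a \<Rightarrow> real) \<Rightarrow> real \<Rightarrow> (real \<Rightarrow> 'a \<Rightarrow> real^'k) \<Rightarrow> (real \<Rightarrow> 'a \<Rightarrow> real^'n)
    \<Rightarrow> (real \<Rightarrow> 'a \<Rightarrow> real^('p\<times>'n)) \<Rightarrow> (real \<Rightarrow> 'a \<Rightarrow> real^('p\<times>'n)) \<Rightarrow> bool" where
  "mfgbcs c M W T u x y z \<longleftrightarrow>
     sde M W T x (gdrift c M x y z u) (gdiff c M x y z u) \<and>
     sde M W T y (ydrift c M x y z) z \<and>
     (AE \<omega> in M. y T \<omega> = cH c *v x T \<omega> + cHb c *v mexp M x T)"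

definition "invDD c s = matrix_inv (cD0 c s ** transpose (cD0 c s))"
definition "invDDh c s = matrix_inv (D0h c s ** transpose (D0h c s))"

definition "A1 c s = cA c s - cB0 c s ** transpose (cD0 c s) ** invDD c s ** cC c s"
definition "A1h c s = Ah c s - B0h c s ** transpose (D0h c s) ** invDDh c s ** Ch c s"
definition "A2 c s = By c s - cB0 c s ** transpose (cD0 c s) ** invDD c s ** Dy c s"
definition "A2h c s = Byh c s - B0h c s ** transpose (D0h c s) ** invDDh c s ** Dyh c s"
definition "C1 c s = cB0 c s ** transpose (cD0 c s) ** invDD c s"
definition "C1h c s = B0h c s ** transpose (D0h c s) ** invDDh c s"
definition "C2 c s = Bz c s - cB0 c s ** transpose (cD0 c s) ** invDD c s ** Dz c s"
definition "C2h c s = Bzh c s - B0h c s ** transpose (D0h c s) ** invDDh c s ** Dzh c s"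
definition "B1 c s = cB0 c s ** (mat 1 - transpose (cD0 c s) ** invDD c s ** cD0 c s)"
definition "B1h c s = B0h c s ** (mat 1 - transpose (D0h c s) ** invDDh c s ** D0h c s)"

definition "bA c s = blk2 (A1 c s) (A2 c s) (- cQ c s) (- transpose (cdiag (cA c s)))"
definition "bAb c s = blk2 (A1h c s - A1 c s) (A2h c s - A2 c s) (- cQb c s)
                         (- transpose (cdiag (cAb c s)))"
definition "bC c s = blk2 (C1 c s) (C2 c s) 0 (- transpose (cdiag (cC c s)))"
definition "bCb c s = blk2 (C1h c s - C1 c s) (C2h c s - C2 c s) 0 (- transpose (cdiag (cCb c s)))"
definition "bB c s = vstack (B1 c s) 0"
definition "bBb c s = vstack (B1h c s - B1 c s) 0"

definition bwd :: "('n::finite, 'k::finite, 'm::finite, 'p::finite) coef \<Rightarrow> 'a measure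
    \<Rightarrow> (real \<Rightarrow> 'a \<Rightarrow> real) \<Rightarrow> real \<Rightarrow> (real \<Rightarrow> 'a \<Rightarrow> real^'k)
    \<Rightarrow> (real \<Rightarrow> 'a \<Rightarrow> real^('n + ('p\<times>'n))) \<Rightarrow> (real \<Rightarrow> 'a \<Rightarrow> real^('n + ('p\<times>'n))) \<Rightarrow> bool" where
  "bwd c M W T v Y Z \<longleftrightarrow>
     sde M W T Y (\<lambda>s \<omega>. bA c s *v Y s \<omega> + bAb c s *v mexp M Y s + bC c s *v Z s \<omega>
                      + bCb c s *v mexp M Z s + bB c s *v v s \<omega> + bBb c s *v mexp M v s) Z \<and>
     (AE \<omega> in M. vbot (Y T \<omega>) = cH c *v vtop (Y T \<omega>) + cHb c *v mexp M (\<lambda>s \<omega>. vtop (Y s \<omega>)) T)"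

definition qfrom :: "('n::finite, 'k::finite, 'm::finite, 'p::finite) coef \<Rightarrow> 'a measure
    \<Rightarrow> (real \<Rightarrow> 'a \<Rightarrow> real^'k) \<Rightarrow> (real \<Rightarrow> 'a \<Rightarrow> real^'n)
    \<Rightarrow> (real \<Rightarrow> 'a \<Rightarrow> real^('p\<times>'n)) \<Rightarrow> (real \<Rightarrow> 'a \<Rightarrow> real^('p\<times>'n)) \<Rightarrow> real \<Rightarrow> 'a \<Rightarrow> real^'n" where
  "qfrom c M u x y z s \<omega> =
     cC c s *v (x s \<omega> - mexp M x s) + Dy c s *v (y s \<omega> - mexp M y s)
     + Dz c s *v (z s \<omega> - mexp M z s) + cD0 c s *v (u s \<omega> - mexp M u s)
     + Ch c s *v mexp M x s + Dyh c s *v mexp M y s + Dzh c s *v mexp M z s + D0h c s *v mexp M u s"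

definition ufrom :: "('n::finite, 'k::finite, 'm::finite, 'p::finite) coef \<Rightarrow> 'a measure
    \<Rightarrow> (real \<Rightarrow> 'a \<Rightarrow> real^'k) \<Rightarrow> (real \<Rightarrow> 'a \<Rightarrow> real^'n) \<Rightarrow> (real \<Rightarrow> 'a \<Rightarrow> real^('p\<times>'n))
    \<Rightarrow> (real \<Rightarrow> 'a \<Rightarrow> real^'n) \<Rightarrow> (real \<Rightarrow> 'a \<Rightarrow> real^('p\<times>'n)) \<Rightarrow> real \<Rightarrow> 'a \<Rightarrow> real^'k" where
  "ufrom c M v x y q z s \<omega> =
     (transpose (cD0 c s) ** invDD c s) *v
        ((q s \<omega> - mexp M q s) - cC c s *v (x s \<omega> - mexp M x s)
         - Dy c s *v (y s \<omega> - mexp M y s) - Dz c s *v (z s \<omega> - mexp M z s))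
     + (mat 1 - transpose (cD0 c s) ** invDD c s ** cD0 c s) *v (v s \<omega> - mexp M v s)
     + (transpose (D0h c s) ** invDDh c s) *v
        (mexp M q s - Ch c s *v mexp M x s - Dyh c s *v mexp M y s - Dzh c s *v mexp M z s)
     + (mat 1 - transpose (D0h c s) ** invDDh c s ** D0h c s) *v mexp M v s"

end

theory Submission
  imports Defs
begin

(*
  The backward system is the MF-GBCS in which the diffusion coefficient of x* has been given
  the name q and the leader's control has been eliminated.

  (i) Take q to be the diffusion coefficient of x*. Substituting it into the backward drift
  gives back the forward drift: an algebraic identity between the values of the processes and
  their means at each time.

  (ii) Coercivity makes K = D0^T (D0 D0^T)^-1 a right inverse of D0, bounded uniformly in time,
  and likewise for the hatted matrices. Hence u0 defined from (q, v) makes the fluctuation and the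
  mean of D0 u0 + D0bar E[u0] equal those of q, while the remaining part (I - K D0) v of u0 enters
  the drift only through B1.

  In both directions the Ito equations are moved between the stacked vector y = (x*, y_-0) and
  its blocks component by component. Square integrability is preserved because every coefficient,
  (D0 D0^T)^-1 included, is essentially bounded.
*)

section \<open>Block vectors and matrices\<close>

lemma stack_vtop_vbot [simp]: "stack (vtop v) (vbot v) = v"
  by (simp add: stack_def vtop_def vbot_def vec_eq_iff split: sum.split)

lemma vtop_stack [simp]: "vtop (stack a b) = a"
  and vbot_stack [simp]: "vbot (stack a b) = b"
  by (simp_all add: stack_def vtop_def vbot_def vec_eq_iff)

lemma vtop_add: "vtop (a + b) = vtop a + vtop b"
  and vbot_add: "vbot (a + b) = vbot a + vbot b"
  by (simp_all add: vtop_def vbot_def vec_eq_iff)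

lemma stack_add: "stack a b + stack a' b' = stack (a + a') (b + b')"
  by (simp add: stack_def vec_eq_iff split: sum.split)

lemma scaleR_stack: "r *\<^sub>R stack a b = stack (r *\<^sub>R a) (r *\<^sub>R b)"
  by (simp add: stack_def vec_eq_iff split: sum.split)

lemma sum_UNIV_sum_type:
  "(\<Sum>r\<in>(UNIV :: ('a::finite + 'b::finite) set). f r) = (\<Sum>i\<in>UNIV. f (Inl i)) + (\<Sum>j\<in>UNIV. f (Inr j))"
  using sum.Plus[of "UNIV :: 'a set" "UNIV :: 'b set" f] by (simp add: o_def)

lemma blk2_mult_stack:
  "vtop (blk2 P Q R S *v stack a b) = P *v a + Q *v b"
  "vbot (blk2 P Q R S *v stack a b) = R *v a + S *v b"
  by (simp_all add: blk2_def vtop_def vbot_def stack_def matrix_vector_mult_def vec_eq_iff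
      sum_UNIV_sum_type)

lemma vstack_mult:
  "vtop (vstack P Q *v v) = P *v v"
  "vbot (vstack P Q *v v) = Q *v v"
  by (simp_all add: vstack_def vtop_def vbot_def matrix_vector_mult_def vec_eq_iff)

lemma matrix_vector_mult_uminus:
  fixes A :: "real^'m::finite^'n::finite"
  shows "(- A) *v x = - (A *v x)" and "A *v (- x) = - (A *v x)"
  by (simp_all add: matrix_vector_mult_def vec_eq_iff sum_negf)

definition vec_reindex :: "('m::finite \<Rightarrow> 'k::finite) \<Rightarrow> real^'k \<Rightarrow> real^'m" where
  "vec_reindex g v = (\<chi> i. v $ g i)"

lemma bounded_linear_vec_reindex: "bounded_linear (vec_reindex g)"
  unfolding linear_conv_bounded_linear[symmetric]
  by (rule linearI) (simp_all add: vec_reindex_def vec_eq_iff)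

lemma vtop_eq_vec_reindex: "vtop = vec_reindex Inl"
  and vbot_eq_vec_reindex: "vbot = vec_reindex Inr"
  by (simp_all add: fun_eq_iff vec_reindex_def vtop_def vbot_def)

lemma bounded_linear_vtop: "bounded_linear vtop"
  and bounded_linear_vbot: "bounded_linear vbot"
  by (simp_all add: vtop_eq_vec_reindex vbot_eq_vec_reindex bounded_linear_vec_reindex)

lemma bounded_linear_stack_left: "bounded_linear (\<lambda>a. stack a (0::real^'b::finite) :: real^('a::finite + 'b))"
  and bounded_linear_stack_right: "bounded_linear (\<lambda>b. stack (0::real^'a::finite) b :: real^('a + 'b::finite))"
  unfolding linear_conv_bounded_linear[symmetric]
  by (auto intro!: linearI simp: stack_def vec_eq_iff split: sum.split)

lemma stack_eq_add: "stack a b = stack a 0 + stack 0 b"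
  by (simp add: stack_add)

lemma integrable_stack:
  fixes f :: "'x \<Rightarrow> real^'a::finite" and g :: "'x \<Rightarrow> real^'b::finite"
  assumes "integrable N f" "integrable N g"
  shows "integrable N (\<lambda>x. stack (f x) (g x))"
  by (subst stack_eq_add)
    (intro Bochner_Integration.integrable_add integrable_bounded_linear[OF bounded_linear_stack_left]
      integrable_bounded_linear[OF bounded_linear_stack_right] assms)

lemma integral_stack:
  fixes f :: "'x \<Rightarrow> real^'a::finite" and g :: "'x \<Rightarrow> real^'b::finite"
  assumes "integrable N f" "integrable N g"
  shows "(LINT x|N. stack (f x) (g x)) = stack (LINT x|N. f x) (LINT x|N. g x)"
  using assms
  by (subst (1 2) stack_eq_add)
    (simp add: integrable_bounded_linear[OF bounded_linear_stack_left]
      integrable_bounded_linear[OF bounded_linear_stack_right]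
      integral_bounded_linear[OF bounded_linear_stack_left]
      integral_bounded_linear[OF bounded_linear_stack_right])

lemma norm_vec_power2: "(norm (v :: 'b::real_normed_vector^'n::finite))\<^sup>2 = (\<Sum>i\<in>UNIV. (norm (v $ i))\<^sup>2)"
  unfolding norm_vec_def L2_set_def by (simp add: sum_nonneg)

lemma norm_stack_power2:
  "(norm (stack (a::real^'a::finite) (b::real^'b::finite)))\<^sup>2 = (norm a)\<^sup>2 + (norm b)\<^sup>2"
  by (simp add: norm_vec_power2 sum_UNIV_sum_type stack_def)

lemma norm_vtop_le: "norm (vtop v) \<le> norm v"
  and norm_vbot_le: "norm (vbot v) \<le> norm v"
  using norm_stack_power2[of "vtop v" "vbot v"]
  by (auto intro: power2_le_imp_le)

lemma norm_matrix_vector_mult_le: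
  fixes A :: "real^'m::finite^'n::finite"
  shows "norm (A *v x) \<le> norm A * norm x"
proof (rule power2_le_imp_le)
  have "(norm (A *v x))\<^sup>2 = (\<Sum>i\<in>UNIV. (A $ i \<bullet> x)\<^sup>2)"
    by (simp add: norm_vec_power2 matrix_vector_mul_component)
  also have "\<dots> \<le> (\<Sum>i\<in>UNIV. (norm (A $ i))\<^sup>2 * (norm x)\<^sup>2)"
    by (intro sum_mono) (metis Cauchy_Schwarz_ineq2 abs_ge_zero power_mono power_mult_distrib power2_abs)
  also have "\<dots> = (norm A * norm x)\<^sup>2"
    by (simp add: norm_vec_power2[of A] sum_distrib_right power_mult_distrib)
  finally show "(norm (A *v x))\<^sup>2 \<le> (norm A * norm x)\<^sup>2" .
qed simp

lemma norm_transpose: "norm (transpose (A :: real^'m::finite^'n::finite)) = norm A"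
proof -
  have "(norm (transpose A))\<^sup>2 = (norm A)\<^sup>2"
    by (simp add: norm_vec_power2 transpose_def sum.swap[of _ "UNIV :: 'n set"])
  then show ?thesis by (simp add: power2_eq_iff_nonneg)
qed

lemma norm_matrix_mult_le:
  fixes A :: "real^'m::finite^'n::finite" and B :: "real^'k::finite^'m"
  shows "norm (A ** B) \<le> norm A * norm B"
proof (rule power2_le_imp_le)
  have row: "(A ** B) $ i = transpose B *v A $ i" for i
    by (simp add: matrix_matrix_mult_def matrix_vector_mult_def transpose_def vec_eq_iff mult.commute)
  have "(norm (A ** B))\<^sup>2 = (\<Sum>i\<in>UNIV. (norm (transpose B *v A $ i))\<^sup>2)"
    by (simp add: norm_vec_power2[of "A ** B"] row)
  also have "\<dots> \<le> (\<Sum>i\<in>UNIV. (norm B)\<^sup>2 * (norm (A $ i))\<^sup>2)"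
    by (intro sum_mono) (metis norm_matrix_vector_mult_le norm_transpose norm_ge_zero power_mono power_mult_distrib)
  also have "\<dots> = (norm A * norm B)\<^sup>2"
    by (simp add: norm_vec_power2[of A] sum_distrib_left power_mult_distrib mult.commute)
  finally show "(norm (A ** B))\<^sup>2 \<le> (norm A * norm B)\<^sup>2" .
qed simp

lemma abs_matrix_entry_le_norm: "\<bar>(A::real^'m::finite^'n::finite) $ i $ j\<bar> \<le> norm A"
  by (meson component_le_norm_cart Finite_Cartesian_Product.norm_nth_le order_trans)

lemma norm_matrix_le_entrywise:
  fixes A :: "real^'m::finite^'n::finite"
  assumes "\<And>i j. \<bar>A $ i $ j\<bar> \<le> K"
  shows "norm A \<le> real CARD('n) * real CARD('m) * K"
proof -
  have "norm A \<le> (\<Sum>i\<in>UNIV. norm (A $ i))"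
    unfolding norm_vec_def by (rule L2_set_le_sum) auto
  also have "\<dots> \<le> (\<Sum>i\<in>(UNIV::'n set). \<Sum>j\<in>(UNIV::'m set). K)"
    by (intro sum_mono order.trans[OF norm_le_l1_cart] assms)
  finally show ?thesis by simp
qed

lemma norm_bdiag_le:
  fixes A :: "real^'m::finite^'n::finite" and own :: "'m \<Rightarrow> 'p::finite"
  shows "norm (bdiag own A) \<le> real CARD('p \<times> 'n) * real CARD('m) * norm A"
  by (rule norm_matrix_le_entrywise) (simp add: bdiag_def abs_matrix_entry_le_norm)

lemma borel_measurable_vec_nth [measurable (raw)]:
  fixes f :: "'x \<Rightarrow> 'b::euclidean_space^'n"
  shows "f \<in> borel_measurable N \<Longrightarrow> (\<lambda>x. f x $ i) \<in> borel_measurable N"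
  by (rule measurable_compose[of f N borel])
    (auto intro!: borel_measurable_continuous_onI linear_continuous_on bounded_linear_vec_nth)

lemma borel_measurable_vec_nth_iff:
  fixes f :: "'x \<Rightarrow> 'b::euclidean_space^'n::finite"
  shows "f \<in> borel_measurable N \<longleftrightarrow> (\<forall>i. (\<lambda>x. f x $ i) \<in> borel_measurable N)"
proof (intro iffI allI borel_measurable_vec_nth)
  assume nth: "\<forall>i. (\<lambda>x. f x $ i) \<in> borel_measurable N"
  show "f \<in> borel_measurable N"
    unfolding borel_measurable_euclidean_space[where f=f]
  proof
    fix b :: "'b^'n" assume "b \<in> Basis"
    then obtain i u where b: "b = axis i u" unfolding Basis_vec_def by auto
    have [measurable]: "(\<lambda>x. f x $ i) \<in> borel_measurable N" using nth by blast
    show "(\<lambda>x. f x \<bullet> b) \<in> borel_measurable N" by (simp add: b inner_axis)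
  qed
qed

lemma borel_measurable_vec_lambda [measurable (raw)]:
  fixes g :: "'n::finite \<Rightarrow> 'x \<Rightarrow> 'b::euclidean_space"
  shows "(\<And>i. g i \<in> borel_measurable N) \<Longrightarrow> (\<lambda>x. \<chi> i. g i x) \<in> borel_measurable N"
  by (simp add: borel_measurable_vec_nth_iff)

lemma borel_measurable_matrix_vector_mult [measurable (raw)]:
  fixes f :: "'x \<Rightarrow> real^'m::finite^'n::finite" and g :: "'x \<Rightarrow> real^'m"
  assumes [measurable]: "f \<in> borel_measurable N" "g \<in> borel_measurable N"
  shows "(\<lambda>x. f x *v g x) \<in> borel_measurable N"
  unfolding matrix_vector_mult_def by measurable

lemma borel_measurable_matrix_matrix_mult [measurable (raw)]:
  fixes f :: "'x \<Rightarrow> real^'m::finite^'n::finite" and g :: "'x \<Rightarrow> real^'k::finite^'m"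
  assumes [measurable]: "f \<in> borel_measurable N" "g \<in> borel_measurable N"
  shows "(\<lambda>x. f x ** g x) \<in> borel_measurable N"
  unfolding matrix_matrix_mult_def by measurable

lemma borel_measurable_transpose [measurable (raw)]:
  fixes f :: "'x \<Rightarrow> real^'m::finite^'n::finite"
  shows "f \<in> borel_measurable N \<Longrightarrow> (\<lambda>x. transpose (f x)) \<in> borel_measurable N"
  unfolding transpose_def by measurable

lemma borel_measurable_det [measurable (raw)]:
  fixes f :: "'x \<Rightarrow> real^'n::finite^'n"
  assumes [measurable]: "f \<in> borel_measurable N"
  shows "(\<lambda>x. det (f x)) \<in> borel_measurable N"
  unfolding det_def by measurable

lemma borel_measurable_vtop [measurable (raw)]:
  fixes f :: "'x \<Rightarrow> real^('a::finite + 'b::finite)"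
  shows "f \<in> borel_measurable N \<Longrightarrow> (\<lambda>x. vtop (f x)) \<in> borel_measurable N"
  and borel_measurable_vbot [measurable (raw)]:
    "f \<in> borel_measurable N \<Longrightarrow> (\<lambda>x. vbot (f x)) \<in> borel_measurable N"
  unfolding vtop_def vbot_def by (intro borel_measurable_vec_lambda borel_measurable_vec_nth; assumption)+

lemma borel_measurable_stack [measurable (raw)]:
  fixes f :: "'x \<Rightarrow> real^'a::finite" and g :: "'x \<Rightarrow> real^'b::finite"
  assumes "f \<in> borel_measurable N" "g \<in> borel_measurable N"
  shows "(\<lambda>x. stack (f x) (g x)) \<in> borel_measurable N"
  unfolding borel_measurable_vec_nth_iff[of "\<lambda>x. stack (f x) (g x)"]
proof
  fix r show "(\<lambda>x. stack (f x) (g x) $ r) \<in> borel_measurable N"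
    using assms by (cases r) (auto simp: stack_def)
qed

lemma borel_measurable_vstack [measurable (raw)]:
  fixes f :: "'x \<Rightarrow> real^'c::finite^'a::finite" and g :: "'x \<Rightarrow> real^'c^'b::finite"
  assumes "f \<in> borel_measurable N" "g \<in> borel_measurable N"
  shows "(\<lambda>x. vstack (f x) (g x)) \<in> borel_measurable N"
  unfolding borel_measurable_vec_nth_iff[of "\<lambda>x. vstack (f x) (g x)"]
proof
  fix r show "(\<lambda>x. vstack (f x) (g x) $ r) \<in> borel_measurable N"
    using assms by (cases r) (auto simp: vstack_def)
qed

lemma borel_measurable_blk2 [measurable (raw)]:
  fixes P :: "'x \<Rightarrow> real^'c1::finite^'r1::finite" and Q :: "'x \<Rightarrow> real^'c2::finite^'r1"
    and R :: "'x \<Rightarrow> real^'c1^'r2::finite" and S :: "'x \<Rightarrow> real^'c2^'r2"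
  assumes "P \<in> borel_measurable N" "Q \<in> borel_measurable N"
    and "R \<in> borel_measurable N" "S \<in> borel_measurable N"
  shows "(\<lambda>x. blk2 (P x) (Q x) (R x) (S x)) \<in> borel_measurable N"
  unfolding borel_measurable_vec_nth_iff[of "\<lambda>x. blk2 (P x) (Q x) (R x) (S x)"]
proof
  fix r
  show "(\<lambda>x. blk2 (P x) (Q x) (R x) (S x) $ r) \<in> borel_measurable N"
    unfolding borel_measurable_vec_nth_iff[of "\<lambda>x. blk2 (P x) (Q x) (R x) (S x) $ r"]
  proof
    fix c show "(\<lambda>x. blk2 (P x) (Q x) (R x) (S x) $ r $ c) \<in> borel_measurable N"
      using assms by (cases r; cases c) (auto simp: blk2_def)
  qed
qed

lemma borel_measurable_cdiag [measurable (raw)]: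
  fixes f :: "'x \<Rightarrow> real^'n::finite^'n"
  assumes "f \<in> borel_measurable N"
  shows "(\<lambda>x. cdiag (f x) :: real^('p::finite \<times> 'n)^('p \<times> 'n)) \<in> borel_measurable N"
  unfolding cdiag_def
proof (intro borel_measurable_vec_lambda)
  fix r c :: "'p \<times> 'n"
  show "(\<lambda>x. if fst r = fst c then f x $ snd r $ snd c else 0) \<in> borel_measurable N"
    using assms by (cases "fst r = fst c") auto
qed

lemma borel_measurable_bdiag [measurable (raw)]:
  fixes f :: "'x \<Rightarrow> real^'m::finite^'n::finite" and own :: "'m \<Rightarrow> 'p::finite"
  assumes "f \<in> borel_measurable N"
  shows "(\<lambda>x. bdiag own (f x)) \<in> borel_measurable N"
  unfolding bdiag_def
proof (intro borel_measurable_vec_lambda)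
  fix r j
  show "(\<lambda>x. if own j = fst r then f x $ snd r $ j else 0) \<in> borel_measurable N"
    using assms by (cases "own j = fst r") auto
qed

lemma matrix_inv_right: "invertible A \<Longrightarrow> A ** matrix_inv A = mat 1"
  unfolding invertible_def matrix_inv_def by (metis (mono_tags, lifting) someI_ex)

text \<open>Cramer's rule; on singular matrices \<open>matrix_inv\<close> is the unspecified \<open>SOME A'. False\<close>.\<close>

lemma matrix_inv_eq_cramer:
  fixes A :: "real^'n::finite^'n"
  shows "matrix_inv A = (if det A \<noteq> 0
    then (\<chi> i k. det (\<chi> a b. if b = i then axis k 1 $ a else A $ a $ b) / det A)
    else (SOME A'. False))"
proof (cases "det A = 0")
  case True
  then have "\<not> invertible A" by (simp add: invertible_det_nz)
  then have "(\<lambda>A'. A ** A' = mat 1 \<and> A' ** A = mat 1) = (\<lambda>A'. False)"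
    unfolding invertible_def by auto
  then show ?thesis using True unfolding matrix_inv_def by simp
next
  case False
  then have inv: "invertible A" by (simp add: invertible_det_nz)
  have "A *v (matrix_inv A *v axis k 1) = axis k 1" for k
    by (simp add: matrix_vector_mul_assoc matrix_inv_right[OF inv])
  then have "matrix_inv A *v axis k 1
      = (\<chi> i. det (\<chi> a b. if b = i then axis k 1 $ a else A $ a $ b) / det A)" for k
    using cramer[OF False] by blast
  moreover have "matrix_inv A $ i $ k = (matrix_inv A *v axis k 1) $ i" for i k
    by (simp add: matrix_vector_mult_def axis_def if_distrib cong: if_cong)
  ultimately show ?thesis using False by (simp add: vec_eq_iff)
qed

lemma borel_measurable_matrix_inv [measurable (raw)]:
  fixes f :: "'x \<Rightarrow> real^'n::finite^'n"
  assumes [measurable]: "f \<in> borel_measurable N"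
  shows "(\<lambda>x. matrix_inv (f x)) \<in> borel_measurable N"
  unfolding matrix_inv_eq_cramer by measurable

lemma norm_le_of_coercive:
  fixes P :: "real^'n::finite^'n"
  assumes "0 < \<delta>" and coercive: "\<And>\<xi>. \<delta> * (\<xi> \<bullet> \<xi>) \<le> \<xi> \<bullet> (P *v \<xi>)"
  shows "\<delta> * norm w \<le> norm (P *v w)"
proof -
  have "\<delta> * (norm w * norm w) \<le> norm w * norm (P *v w)"
    using coercive[of w] norm_cauchy_schwarz[of w "P *v w"]
    by (simp add: dot_square_norm power2_eq_square)
  then have "norm w * (\<delta> * norm w) \<le> norm w * norm (P *v w)"
    by (simp add: mult_ac)
  then show ?thesis
    by (cases "norm w = 0") (auto simp: mult_le_cancel_left)
qed

lemma invertible_coercive: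
  fixes P :: "real^'n::finite^'n"
  assumes "0 < \<delta>" and "\<And>\<xi>. \<delta> * (\<xi> \<bullet> \<xi>) \<le> \<xi> \<bullet> (P *v \<xi>)"
  shows "invertible P"
proof -
  have "P *v w = 0 \<Longrightarrow> w = 0" for w
    using norm_le_of_coercive[OF assms, of w] \<open>0 < \<delta>\<close> by (simp add: mult_le_0_iff)
  then have "inj ((*v) P)"
    by (intro injI) (metis eq_iff_diff_eq_0 matrix_vector_mult_diff_distrib)
  then obtain B where "B ** P = mat 1" using matrix_left_invertible_injective by blast
  then show ?thesis by (meson invertible_left_inverse)
qed

lemma norm_matrix_inv_coercive_le:
  fixes P :: "real^'n::finite^'n"
  assumes "0 < \<delta>" and "\<And>\<xi>. \<delta> * (\<xi> \<bullet> \<xi>) \<le> \<xi> \<bullet> (P *v \<xi>)"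
  shows "norm (matrix_inv P) \<le> real CARD('n) * real CARD('n) / \<delta>"
proof -
  have "norm (matrix_inv P) \<le> real CARD('n) * real CARD('n) * (1 / \<delta>)"
  proof (rule norm_matrix_le_entrywise)
    fix i j
    let ?w = "matrix_inv P *v axis j 1"
    have "P *v ?w = axis j 1"
      by (simp add: matrix_vector_mul_assoc matrix_inv_right[OF invertible_coercive[OF assms]])
    then have "\<delta> * norm ?w \<le> 1" using norm_le_of_coercive[OF assms, of ?w] by simp
    then have "norm ?w \<le> 1 / \<delta>" using \<open>0 < \<delta>\<close> by (simp add: field_simps)
    moreover have "matrix_inv P $ i $ j = ?w $ i"
      by (simp add: matrix_vector_mult_def axis_def if_distrib cong: if_cong)
    ultimately show "\<bar>matrix_inv P $ i $ j\<bar> \<le> 1 / \<delta>"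
      by (metis component_le_norm_cart order_trans)
  qed
  then show ?thesis by simp
qed

section \<open>Essentially bounded coefficients\<close>

text \<open>Unlike \<open>linf\<close>, the bound is only required almost everywhere, which is all the coercivity
  of \<open>D\<^sub>0 D\<^sub>0\<^sup>T\<close> provides for its inverse.\<close>

definition linf_ae :: "real \<Rightarrow> (real \<Rightarrow> 'v::real_normed_vector) \<Rightarrow> bool" where
  "linf_ae T G \<longleftrightarrow> G \<in> borel_measurable (restrict_space lborel {0..T}) \<and>
     (\<exists>K. AE s in lborel. s \<in> {0..T} \<longrightarrow> norm (G s) \<le> K)"

lemma linf_ae_measurable: "linf_ae T G \<Longrightarrow> G \<in> borel_measurable (restrict_space lborel {0..T})"
  unfolding linf_ae_def by blast

lemma linf_ae_binop:
  assumes "linf_ae T F" "linf_ae T G" "H \<in> borel_measurable (restrict_space lborel {0..T})"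
    and bound: "\<And>s K1 K2. norm (F s) \<le> K1 \<Longrightarrow> norm (G s) \<le> K2 \<Longrightarrow> norm (H s) \<le> f K1 K2"
  shows "linf_ae T H"
proof -
  obtain K1 K2 where "AE s in lborel. s \<in> {0..T} \<longrightarrow> norm (F s) \<le> K1"
    and "AE s in lborel. s \<in> {0..T} \<longrightarrow> norm (G s) \<le> K2"
    using assms(1,2) unfolding linf_ae_def by blast
  then have "AE s in lborel. s \<in> {0..T} \<longrightarrow> norm (H s) \<le> f K1 K2"
    by eventually_elim (blast intro: bound)
  with assms(3) show ?thesis unfolding linf_ae_def by blast
qed

lemma linf_ae_const: "linf_ae T (\<lambda>s. C)"
  unfolding linf_ae_def by (auto intro!: exI[of _ "norm C"])

lemma linf_ae_add:
  fixes F G :: "real \<Rightarrow> 'v::{real_normed_vector, second_countable_topology}"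
  assumes "linf_ae T F" "linf_ae T G"
  shows "linf_ae T (\<lambda>s. F s + G s)"
proof (rule linf_ae_binop[OF assms, where f="(+)"])
  note [measurable] = assms[THEN linf_ae_measurable]
  show "(\<lambda>s. F s + G s) \<in> borel_measurable (restrict_space lborel {0..T})" by measurable
qed (meson add_mono norm_triangle_le)

lemma linf_ae_diff:
  fixes F G :: "real \<Rightarrow> 'v::{real_normed_vector, second_countable_topology}"
  assumes "linf_ae T F" "linf_ae T G"
  shows "linf_ae T (\<lambda>s. F s - G s)"
proof (rule linf_ae_binop[OF assms, where f="(+)"])
  note [measurable] = assms[THEN linf_ae_measurable]
  show "(\<lambda>s. F s - G s) \<in> borel_measurable (restrict_space lborel {0..T})" by measurable
qed (meson add_mono norm_triangle_le_diff)

lemma linf_ae_uminus: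
  fixes F :: "real \<Rightarrow> 'v::{real_normed_vector, second_countable_topology}"
  assumes "linf_ae T F"
  shows "linf_ae T (\<lambda>s. - F s)"
proof (rule linf_ae_binop[OF assms assms, where f="\<lambda>K1 K2. K1"])
  note [measurable] = assms[THEN linf_ae_measurable]
  show "(\<lambda>s. - F s) \<in> borel_measurable (restrict_space lborel {0..T})" by measurable
qed simp

lemma linf_ae_matrix_mult:
  fixes F :: "real \<Rightarrow> real^'m::finite^'n::finite" and G :: "real \<Rightarrow> real^'k::finite^'m"
  assumes "linf_ae T F" "linf_ae T G"
  shows "linf_ae T (\<lambda>s. F s ** G s)"
proof (rule linf_ae_binop[OF assms, where f="(*)"])
  note [measurable] = assms[THEN linf_ae_measurable]
  show "(\<lambda>s. F s ** G s) \<in> borel_measurable (restrict_space lborel {0..T})" by measurable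
next
  fix s K1 K2 assume "norm (F s) \<le> K1" "norm (G s) \<le> K2"
  then show "norm (F s ** G s) \<le> K1 * K2"
    by (meson mult_mono norm_ge_zero norm_matrix_mult_le order_trans)
qed

lemma linf_ae_transpose:
  fixes F :: "real \<Rightarrow> real^'m::finite^'n::finite"
  assumes "linf_ae T F"
  shows "linf_ae T (\<lambda>s. transpose (F s))"
proof (rule linf_ae_binop[OF assms assms, where f="\<lambda>K1 K2. K1"])
  note [measurable] = assms[THEN linf_ae_measurable]
  show "(\<lambda>s. transpose (F s)) \<in> borel_measurable (restrict_space lborel {0..T})" by measurable
qed (simp add: norm_transpose)

lemma linf_ae_bdiag:
  fixes F :: "real \<Rightarrow> real^'m::finite^'n::finite" and own :: "'m \<Rightarrow> 'p::finite"
  assumes "linf_ae T F"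
  shows "linf_ae T (\<lambda>s. bdiag own (F s))"
proof (rule linf_ae_binop[OF assms assms, where f="\<lambda>K1 K2. real CARD('p \<times> 'n) * real CARD('m) * K1"])
  note [measurable] = assms[THEN linf_ae_measurable]
  show "(\<lambda>s. bdiag own (F s)) \<in> borel_measurable (restrict_space lborel {0..T})" by measurable
next
  fix s K1 K2 assume "norm (F s) \<le> K1"
  then show "norm (bdiag own (F s)) \<le> real CARD('p \<times> 'n) * real CARD('m) * K1"
    by (meson mult_left_mono norm_bdiag_le of_nat_0_le_iff mult_nonneg_nonneg order_trans)
qed

lemma measurable_restrict_lborel:
  "measurable (restrict_space lborel S) N = measurable (restrict_space borel S) N"
  by (rule measurable_cong_sets) (simp_all add: sets_restrict_space)

lemma linf_ae_bounded:
  assumes "G \<in> borel_measurable (restrict_space lborel {0..T})" "bounded (G ` {0..T})"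
  shows "linf_ae T G"
  using assms unfolding linf_ae_def bounded_iff by (blast intro: AE_I2)

lemma linf_imp_linf_ae: "linf T G \<Longrightarrow> linf_ae T G"
  by (intro linf_ae_bounded) (simp_all add: linf_def measurable_restrict_lborel)

section \<open>Square-integrable progressive processes\<close>

lemma SUP_closure_continuous:
  fixes h :: "'a::topological_space \<Rightarrow> 'b::{complete_linorder, linorder_topology}"
  assumes "continuous_on (closure D) h"
  shows "(SUP x\<in>closure D. h x) = (SUP x\<in>D. h x)"
proof (rule antisym)
  have "h ` closure D \<subseteq> {..(SUP x\<in>D. h x)}"
    using assms by (intro image_closure_subset) (auto intro: SUP_upper)
  then show "(SUP x\<in>closure D. h x) \<le> (SUP x\<in>D. h x)" by (auto intro: SUP_least)
qed (intro SUP_subset_mono closure_subset order_refl)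

lemma closure_Icc_Int_Rats:
  assumes "0 < T"
  shows "closure ({0..T} \<inter> \<rat>) = {0..(T::real)}"
proof -
  have "closure ({0..T} \<inter> \<rat>) = closure {0..T}"
    using assms by (intro closure_convex_Int_superset) (auto simp: Rats_closure_real)
  then show ?thesis by simp
qed

text \<open>Continuity of the paths reduces the supremum to a countable one.\<close>

lemma borel_measurable_SUP_continuous_paths:
  fixes f :: "real \<Rightarrow> 'a \<Rightarrow> 'v::euclidean_space"
  assumes "0 < T" and cont: "\<And>\<omega>. \<omega> \<in> space N \<Longrightarrow> continuous_on {0..T} (\<lambda>s. f s \<omega>)"
    and meas: "\<And>s. s \<in> {0..T} \<Longrightarrow> f s \<in> borel_measurable N"
  shows "(\<lambda>\<omega>. SUP s\<in>{0..T}. ennreal ((norm (f s \<omega>))\<^sup>2)) \<in> borel_measurable N"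
proof -
  have "(\<lambda>\<omega>. SUP s\<in>{0..T} \<inter> \<rat>. ennreal ((norm (f s \<omega>))\<^sup>2)) \<in> borel_measurable N"
  proof (rule borel_measurable_SUP)
    fix s assume "s \<in> {0..T} \<inter> \<rat>"
    then have [measurable]: "f s \<in> borel_measurable N" using meas by auto
    show "(\<lambda>\<omega>. ennreal ((norm (f s \<omega>))\<^sup>2)) \<in> borel_measurable N" by measurable
  qed (simp add: countable_rat)
  moreover have "(SUP s\<in>{0..T}. ennreal ((norm (f s \<omega>))\<^sup>2))
      = (SUP s\<in>{0..T} \<inter> \<rat>. ennreal ((norm (f s \<omega>))\<^sup>2))" if "\<omega> \<in> space N" for \<omega>
  proof -
    have "continuous_on (closure ({0..T} \<inter> \<rat>)) (\<lambda>s. ennreal ((norm (f s \<omega>))\<^sup>2))"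
      unfolding closure_Icc_Int_Rats[OF \<open>0 < T\<close>]
      by (intro continuous_on_ennreal continuous_intros cont that)
    from SUP_closure_continuous[OF this] show ?thesis
      unfolding closure_Icc_Int_Rats[OF \<open>0 < T\<close>] .
  qed
  ultimately show ?thesis by (subst measurable_cong) auto
qed

lemma (in finite_measure) integrable_of_nn_integral_power2_finite:
  fixes X :: "'a \<Rightarrow> 'v::{banach, second_countable_topology}"
  assumes [measurable]: "X \<in> borel_measurable M"
    and "(\<integral>\<^sup>+\<omega>. ennreal ((norm (X \<omega>))\<^sup>2) \<partial>M) < \<infinity>"
  shows "integrable M X"
proof -
  have "integrable M (\<lambda>\<omega>. (norm (X \<omega>))\<^sup>2)"
    by (rule integrableI_bounded) (use assms(2) in simp_all)
  then have "integrable M (\<lambda>\<omega>. norm (X \<omega>))"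
    by (rule square_integrable_imp_integrable[rotated]) simp
  then show ?thesis by (simp add: integrable_norm_iff)
qed

lemma (in prob_space) norm_integral_power2_le:
  fixes X :: "'a \<Rightarrow> 'v::{banach, second_countable_topology}"
  assumes [measurable]: "X \<in> borel_measurable M"
  shows "ennreal ((norm (LINT \<omega>|M. X \<omega>))\<^sup>2) \<le> (\<integral>\<^sup>+\<omega>. ennreal ((norm (X \<omega>))\<^sup>2) \<partial>M)"
proof (cases "integrable M X")
  case True
  have "ennreal ((norm (LINT \<omega>|M. X \<omega>))\<^sup>2) = (ennreal (norm (LINT \<omega>|M. X \<omega>)))\<^sup>2"
    by (simp add: ennreal_power)
  also have "\<dots> \<le> (\<integral>\<^sup>+\<omega>. ennreal (norm (X \<omega>)) \<partial>M)\<^sup>2"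
    using integral_norm_bound_ennreal[OF True] by (intro power_mono) auto
  also have "\<dots> \<le> (\<integral>\<^sup>+\<omega>. ennreal (norm (X \<omega>)) ^ 2 \<partial>M) * (\<integral>\<^sup>+\<omega>. 1 ^ 2 \<partial>M)"
    using Cauchy_Schwarz_nn_integral[of "\<lambda>\<omega>. ennreal (norm (X \<omega>))" M "\<lambda>_. 1"] by simp
  also have "\<dots> = (\<integral>\<^sup>+\<omega>. ennreal ((norm (X \<omega>))\<^sup>2) \<partial>M)"
    by (simp add: ennreal_power emeasure_space_1)
  finally show ?thesis .
qed (simp add: not_integrable_integral_eq)

lemma power2_le_twice_sum_squares: "(x::real) \<le> a + b \<Longrightarrow> 0 \<le> x \<Longrightarrow> x\<^sup>2 \<le> 2 * a\<^sup>2 + 2 * b\<^sup>2"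
proof -
  assume "x \<le> a + b" "0 \<le> x"
  then have "x\<^sup>2 \<le> (a + b)\<^sup>2" by (intro power_mono)
  also have "\<dots> \<le> 2 * a\<^sup>2 + 2 * b\<^sup>2"
    using zero_le_power2[of "a - b"] unfolding power2_diff power2_sum by linarith
  finally show ?thesis .
qed

lemma measurable_pair_subalgebra:
  assumes "subalgebra M N" "f \<in> measurable (A \<Otimes>\<^sub>M N) K"
  shows "f \<in> measurable (A \<Otimes>\<^sub>M M) K"
proof (rule measurable_from_subalg[OF _ assms(2)])
  have sp: "space N = space M" and st: "sets N \<subseteq> sets M"
    using assms(1) unfolding subalgebra_def by auto
  show "subalgebra (A \<Otimes>\<^sub>M M) (A \<Otimes>\<^sub>M N)"
    unfolding subalgebra_def
  proof
    show "space (A \<Otimes>\<^sub>M N) = space (A \<Otimes>\<^sub>M M)" by (simp add: space_pair_measure sp)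
    show "sets (A \<Otimes>\<^sub>M N) \<subseteq> sets (A \<Otimes>\<^sub>M M)"
      unfolding sets_pair_measure sp using st by (intro sigma_sets_mono') blast
  qed
qed

locale progressive_L2 =
  fixes M :: "'a measure" and F :: "real \<Rightarrow> 'a measure" and T :: real
  assumes prob_space_M: "prob_space M" and T_pos: "0 < T" and subalgebra_F: "\<And>t. subalgebra M (F t)"
begin

sublocale P: prob_space M by (rule prob_space_M)

abbreviation Leb :: "real measure" where "Leb \<equiv> restrict_space lborel {0..T}"

sublocale LM: pair_sigma_finite Leb M
proof -
  interpret finite_measure Leb
    by (rule finite_measureI) (simp add: emeasure_restrict_space emeasure_lborel_Icc_eq)
  show "pair_sigma_finite Leb M" by unfold_locales
qed

lemma measurable_Leb_restrict:
  assumes "f \<in> borel_measurable Leb" "t \<in> {0..T}"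
  shows "f \<in> borel_measurable (restrict_space borel {0..t})"
proof -
  have "f \<in> borel_measurable (restrict_space borel {0..T})"
    using assms(1) by (simp add: measurable_restrict_lborel)
  then have "f \<in> borel_measurable (restrict_space (restrict_space borel {0..T}) {0..t})"
    by (rule measurable_restrict_space1)
  moreover have "sets (restrict_space (restrict_space borel {0..T}) {0..t}) = sets (restrict_space borel {0..t})"
    using assms(2) by (simp add: sets_restrict_restrict_space Int_absorb1)
  ultimately show ?thesis using measurable_cong_sets by blast
qed

abbreviation Prog :: "real \<Rightarrow> (real \<times> 'a) measure" where
  "Prog t \<equiv> restrict_space borel {0..t} \<Otimes>\<^sub>M F t"

lemma progressive_iff:
  "progressive M F T \<phi> \<longleftrightarrow> (\<forall>t\<in>{0..T}. (\<lambda>p. \<phi> (fst p) (snd p)) \<in> borel_measurable (Prog t))"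
  unfolding progressive_def by (simp add: case_prod_beta')

lemma progressive_D:
  "progressive M F T \<phi> \<Longrightarrow> t \<in> {0..T} \<Longrightarrow> (\<lambda>p. \<phi> (fst p) (snd p)) \<in> borel_measurable (Prog t)"
  unfolding progressive_iff by blast

lemma progressive_joint_measurable:
  assumes "progressive M F T \<phi>"
  shows "(\<lambda>p. \<phi> (fst p) (snd p)) \<in> borel_measurable (Leb \<Otimes>\<^sub>M M)"
proof -
  have "(\<lambda>p. \<phi> (fst p) (snd p)) \<in> borel_measurable (restrict_space borel {0..T} \<Otimes>\<^sub>M M)"
    using assms T_pos unfolding progressive_iff by (auto intro: measurable_pair_subalgebra[OF subalgebra_F])
  moreover have "sets (Leb \<Otimes>\<^sub>M M) = sets (restrict_space borel {0..T} \<Otimes>\<^sub>M M)"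
    by (intro sets_pair_measure_cong) (simp_all add: sets_restrict_space)
  ultimately show ?thesis using measurable_cong_sets by blast
qed

lemma progressive_path_measurable:
  "progressive M F T \<phi> \<Longrightarrow> \<omega> \<in> space M \<Longrightarrow> (\<lambda>s. \<phi> s \<omega>) \<in> borel_measurable Leb"
  using measurable_Pair1[OF progressive_joint_measurable] by simp

lemma progressive_measurable:
  "progressive M F T \<phi> \<Longrightarrow> s \<in> {0..T} \<Longrightarrow> \<phi> s \<in> borel_measurable M"
  using measurable_Pair2[OF progressive_joint_measurable, of \<phi> s] by simp

lemma borel_measurable_mexp:
  "progressive M F T \<phi> \<Longrightarrow> (\<lambda>s. mexp M \<phi> s) \<in> borel_measurable Leb"
  unfolding mexp_def
  by (rule P.borel_measurable_lebesgue_integral)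
    (simp add: progressive_joint_measurable[unfolded split_beta'] split_beta')

lemma progressive_deterministic:
  assumes "g \<in> borel_measurable Leb"
  shows "progressive M F T (\<lambda>s \<omega>. g s)"
  unfolding progressive_iff
proof
  fix t assume "t \<in> {0..T}"
  note [measurable] = measurable_Leb_restrict[OF assms this]
  show "(\<lambda>p. g (fst p)) \<in> borel_measurable (Prog t)" by measurable
qed

lemma progressive_add:
  fixes \<phi> \<psi> :: "real \<Rightarrow> 'a \<Rightarrow> real^'n::finite"
  assumes "progressive M F T \<phi>" "progressive M F T \<psi>"
  shows "progressive M F T (\<lambda>s \<omega>. \<phi> s \<omega> + \<psi> s \<omega>)"
  unfolding progressive_iff
proof
  fix t assume "t \<in> {0..T}"
  note [measurable] = assms[THEN progressive_D, OF this]
  show "(\<lambda>p. \<phi> (fst p) (snd p) + \<psi> (fst p) (snd p)) \<in> borel_measurable (Prog t)" by measurable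
qed

lemma progressive_diff:
  fixes \<phi> \<psi> :: "real \<Rightarrow> 'a \<Rightarrow> real^'n::finite"
  assumes "progressive M F T \<phi>" "progressive M F T \<psi>"
  shows "progressive M F T (\<lambda>s \<omega>. \<phi> s \<omega> - \<psi> s \<omega>)"
  unfolding progressive_iff
proof
  fix t assume "t \<in> {0..T}"
  note [measurable] = assms[THEN progressive_D, OF this]
  show "(\<lambda>p. \<phi> (fst p) (snd p) - \<psi> (fst p) (snd p)) \<in> borel_measurable (Prog t)" by measurable
qed

lemma progressive_stack:
  fixes \<phi> :: "real \<Rightarrow> 'a \<Rightarrow> real^'m::finite" and \<psi> :: "real \<Rightarrow> 'a \<Rightarrow> real^'n::finite"
  assumes "progressive M F T \<phi>" "progressive M F T \<psi>"
  shows "progressive M F T (\<lambda>s \<omega>. stack (\<phi> s \<omega>) (\<psi> s \<omega>))"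
  unfolding progressive_iff
proof
  fix t assume "t \<in> {0..T}"
  note [measurable] = assms[THEN progressive_D, OF this]
  show "(\<lambda>p. stack (\<phi> (fst p) (snd p)) (\<psi> (fst p) (snd p))) \<in> borel_measurable (Prog t)"
    by measurable
qed

lemma progressive_vtop:
  fixes \<phi> :: "real \<Rightarrow> 'a \<Rightarrow> real^('m::finite + 'n::finite)"
  assumes "progressive M F T \<phi>"
  shows "progressive M F T (\<lambda>s \<omega>. vtop (\<phi> s \<omega>))"
    and "progressive M F T (\<lambda>s \<omega>. vbot (\<phi> s \<omega>))"
  unfolding progressive_iff
proof -
  note [measurable] = assms[THEN progressive_D]
  show "\<forall>t\<in>{0..T}. (\<lambda>p. vtop (\<phi> (fst p) (snd p))) \<in> borel_measurable (Prog t)"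
    and "\<forall>t\<in>{0..T}. (\<lambda>p. vbot (\<phi> (fst p) (snd p))) \<in> borel_measurable (Prog t)"
    by (intro ballI; measurable)+
qed

lemma progressive_matrix_vector_mult:
  fixes \<phi> :: "real \<Rightarrow> 'a \<Rightarrow> real^'m::finite" and G :: "real \<Rightarrow> real^'m^'n::finite"
  assumes "G \<in> borel_measurable Leb" "progressive M F T \<phi>"
  shows "progressive M F T (\<lambda>s \<omega>. G s *v \<phi> s \<omega>)"
  unfolding progressive_iff
proof
  fix t assume t: "t \<in> {0..T}"
  note [measurable] = measurable_Leb_restrict[OF assms(1) t]
    progressive_D[OF assms(2) t]
  show "(\<lambda>p. G (fst p) *v \<phi> (fst p) (snd p)) \<in> borel_measurable (Prog t)"
    by measurable
qed

definition sq_norm_integral :: "(real \<Rightarrow> 'a \<Rightarrow> 'v::real_normed_vector) \<Rightarrow> ennreal" where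
  "sq_norm_integral \<phi> = (\<integral>\<^sup>+p. ennreal ((norm (\<phi> (fst p) (snd p)))\<^sup>2) \<partial>(Leb \<Otimes>\<^sub>M M))"

lemma L2F_iff:
  fixes \<phi> :: "real \<Rightarrow> 'a \<Rightarrow> 'v::euclidean_space"
  shows "L2F M F T \<phi> \<longleftrightarrow> progressive M F T \<phi> \<and> sq_norm_integral \<phi> < \<infinity>"
proof -
  have "(\<integral>\<^sup>+\<omega>. (\<integral>\<^sup>+s. ennreal ((norm (\<phi> s \<omega>))\<^sup>2) * indicator {0..T} s \<partial>lborel) \<partial>M)
      = sq_norm_integral \<phi>" if "progressive M F T \<phi>"
  proof -
    note [measurable] = progressive_joint_measurable[OF that]
    have "(\<integral>\<^sup>+\<omega>. (\<integral>\<^sup>+s. ennreal ((norm (\<phi> s \<omega>))\<^sup>2) * indicator {0..T} s \<partial>lborel) \<partial>M)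
        = (\<integral>\<^sup>+\<omega>. (\<integral>\<^sup>+s. ennreal ((norm (\<phi> s \<omega>))\<^sup>2) \<partial>Leb) \<partial>M)"
      by (simp add: nn_integral_restrict_space)
    also have "\<dots> = sq_norm_integral \<phi>"
      unfolding sq_norm_integral_def
      using LM.nn_integral_snd[of "\<lambda>p. ennreal ((norm (\<phi> (fst p) (snd p)))\<^sup>2)"] by simp
    finally show ?thesis .
  qed
  then show ?thesis unfolding L2F_def by auto
qed

lemma sq_norm_integral_fst:
  fixes \<phi> :: "real \<Rightarrow> 'a \<Rightarrow> 'v::euclidean_space"
  assumes "progressive M F T \<phi>"
  shows "sq_norm_integral \<phi> = (\<integral>\<^sup>+s. (\<integral>\<^sup>+\<omega>. ennreal ((norm (\<phi> s \<omega>))\<^sup>2) \<partial>M) \<partial>Leb)"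
  using progressive_joint_measurable[OF assms]
  unfolding sq_norm_integral_def by (simp add: P.nn_integral_fst[symmetric])

lemma sq_norm_integral_le_sum:
  fixes \<phi> \<psi> :: "real \<Rightarrow> 'a \<Rightarrow> 'v::euclidean_space" and \<rho> :: "real \<Rightarrow> 'a \<Rightarrow> 'w::real_normed_vector"
  assumes "progressive M F T \<phi>" "progressive M F T \<psi>"
    and "\<And>s \<omega>. norm (\<rho> s \<omega>) \<le> norm (\<phi> s \<omega>) + norm (\<psi> s \<omega>)"
  shows "sq_norm_integral \<rho> \<le> 2 * sq_norm_integral \<phi> + 2 * sq_norm_integral \<psi>"
proof -
  note [measurable] = assms(1,2)[THEN progressive_joint_measurable]
  have "ennreal ((norm (\<rho> s \<omega>))\<^sup>2) \<le> 2 * ennreal ((norm (\<phi> s \<omega>))\<^sup>2) + 2 * ennreal ((norm (\<psi> s \<omega>))\<^sup>2)"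
    for s \<omega>
  proof -
    have "ennreal ((norm (\<rho> s \<omega>))\<^sup>2) \<le> ennreal (2 * (norm (\<phi> s \<omega>))\<^sup>2 + 2 * (norm (\<psi> s \<omega>))\<^sup>2)"
      using power2_le_twice_sum_squares[OF assms(3)] by (intro ennreal_leI) simp
    then show ?thesis by (simp add: ennreal_mult)
  qed
  then have "sq_norm_integral \<rho> \<le> (\<integral>\<^sup>+p. 2 * ennreal ((norm (\<phi> (fst p) (snd p)))\<^sup>2)
      + 2 * ennreal ((norm (\<psi> (fst p) (snd p)))\<^sup>2) \<partial>(Leb \<Otimes>\<^sub>M M))"
    unfolding sq_norm_integral_def by (intro nn_integral_mono) auto
  also have "\<dots> = 2 * sq_norm_integral \<phi> + 2 * sq_norm_integral \<psi>"
    unfolding sq_norm_integral_def by (simp add: nn_integral_add nn_integral_cmult)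
  finally show ?thesis .
qed

lemma L2F_add:
  fixes \<phi> \<psi> :: "real \<Rightarrow> 'a \<Rightarrow> real^'n::finite"
  assumes "L2F M F T \<phi>" "L2F M F T \<psi>"
  shows "L2F M F T (\<lambda>s \<omega>. \<phi> s \<omega> + \<psi> s \<omega>)"
    and "L2F M F T (\<lambda>s \<omega>. \<phi> s \<omega> - \<psi> s \<omega>)"
proof -
  have p: "progressive M F T \<phi>" "progressive M F T \<psi>"
    and "sq_norm_integral \<phi> < \<infinity>" "sq_norm_integral \<psi> < \<infinity>"
    using assms by (auto simp: L2F_iff)
  then have fin: "2 * sq_norm_integral \<phi> + 2 * sq_norm_integral \<psi> < \<infinity>"
    by (simp add: ennreal_mult_less_top)
  show "L2F M F T (\<lambda>s \<omega>. \<phi> s \<omega> + \<psi> s \<omega>)"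
    using le_less_trans[OF sq_norm_integral_le_sum[OF p norm_triangle_ineq] fin]
      progressive_add[OF p] by (simp add: L2F_iff)
  show "L2F M F T (\<lambda>s \<omega>. \<phi> s \<omega> - \<psi> s \<omega>)"
    using le_less_trans[OF sq_norm_integral_le_sum[OF p norm_triangle_ineq4] fin]
      progressive_diff[OF p] by (simp add: L2F_iff)
qed

lemma L2F_matrix_vector_mult:
  fixes \<phi> :: "real \<Rightarrow> 'a \<Rightarrow> real^'m::finite" and G :: "real \<Rightarrow> real^'m^'n::finite"
  assumes "linf_ae T G" "L2F M F T \<phi>"
  shows "L2F M F T (\<lambda>s \<omega>. G s *v \<phi> s \<omega>)"
proof -
  obtain K where bound: "AE s in lborel. s \<in> {0..T} \<longrightarrow> norm (G s) \<le> K"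
    and G [measurable]: "G \<in> borel_measurable Leb"
    using assms(1) unfolding linf_ae_def by blast
  have p: "progressive M F T \<phi>" and fin: "sq_norm_integral \<phi> < \<infinity>"
    using assms(2) by (auto simp: L2F_iff)
  note [measurable] = progressive_joint_measurable[OF p]
  have "AE s in Leb. norm (G s) \<le> K" using bound by (subst AE_restrict_space_iff) auto
  then have "AE p in Leb \<Otimes>\<^sub>M M. norm (G (fst p)) \<le> K"
    by (intro LM.AE_pair_measure) (auto simp: AE_I2)
  then have "sq_norm_integral (\<lambda>s \<omega>. G s *v \<phi> s \<omega>)
      \<le> (\<integral>\<^sup>+p. ennreal (K\<^sup>2) * ennreal ((norm (\<phi> (fst p) (snd p)))\<^sup>2) \<partial>(Leb \<Otimes>\<^sub>M M))"
    unfolding sq_norm_integral_def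
  proof (intro nn_integral_mono_AE, elim AE_mp, intro AE_I2 impI)
    fix p :: "real \<times> 'a" assume "norm (G (fst p)) \<le> K"
    then have "norm (G (fst p) *v \<phi> (fst p) (snd p)) \<le> K * norm (\<phi> (fst p) (snd p))"
      by (meson mult_right_mono norm_ge_zero norm_matrix_vector_mult_le order_trans)
    then have "(norm (G (fst p) *v \<phi> (fst p) (snd p)))\<^sup>2 \<le> K\<^sup>2 * (norm (\<phi> (fst p) (snd p)))\<^sup>2"
      by (metis norm_ge_zero power_mono power_mult_distrib)
    then show "ennreal ((norm (G (fst p) *v \<phi> (fst p) (snd p)))\<^sup>2)
        \<le> ennreal (K\<^sup>2) * ennreal ((norm (\<phi> (fst p) (snd p)))\<^sup>2)"
      by (simp add: ennreal_mult[symmetric] ennreal_leI)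
  qed
  also have "\<dots> = ennreal (K\<^sup>2) * sq_norm_integral \<phi>"
    unfolding sq_norm_integral_def by (rule nn_integral_cmult) measurable
  also have "\<dots> < \<infinity>" using fin by (simp add: ennreal_mult_less_top)
  finally show ?thesis using progressive_matrix_vector_mult[OF G p] by (simp add: L2F_iff)
qed

lemma L2F_mexp:
  fixes \<phi> :: "real \<Rightarrow> 'a \<Rightarrow> real^'m::finite"
  assumes "L2F M F T \<phi>"
  shows "L2F M F T (\<lambda>s \<omega>. mexp M \<phi> s)"
proof -
  have p: "progressive M F T \<phi>" and fin: "sq_norm_integral \<phi> < \<infinity>"
    using assms by (auto simp: L2F_iff)
  have pe: "progressive M F T (\<lambda>s \<omega>. mexp M \<phi> s)"
    by (rule progressive_deterministic[OF borel_measurable_mexp[OF p]])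
  have "sq_norm_integral (\<lambda>s \<omega>. mexp M \<phi> s) = (\<integral>\<^sup>+s. ennreal ((norm (mexp M \<phi> s))\<^sup>2) \<partial>Leb)"
    by (simp add: sq_norm_integral_fst[OF pe] P.emeasure_space_1)
  also have "\<dots> \<le> (\<integral>\<^sup>+s. (\<integral>\<^sup>+\<omega>. ennreal ((norm (\<phi> s \<omega>))\<^sup>2) \<partial>M) \<partial>Leb)"
    unfolding mexp_def by (intro nn_integral_mono P.norm_integral_power2_le progressive_measurable[OF p]) auto
  also have "\<dots> = sq_norm_integral \<phi>" by (rule sq_norm_integral_fst[OF p, symmetric])
  finally show ?thesis using fin pe by (simp add: L2F_iff)
qed

lemma L2F_integrable_AE:
  fixes \<phi> :: "real \<Rightarrow> 'a \<Rightarrow> 'v::euclidean_space"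
  assumes "L2F M F T \<phi>"
  shows "AE s in lborel. s \<in> {0..T} \<longrightarrow> integrable M (\<phi> s)"
proof -
  have p: "progressive M F T \<phi>" and fin: "sq_norm_integral \<phi> < \<infinity>"
    using assms by (auto simp: L2F_iff)
  note [measurable] = progressive_joint_measurable[OF p]
  have "(\<lambda>s. \<integral>\<^sup>+\<omega>. ennreal ((norm (\<phi> s \<omega>))\<^sup>2) \<partial>M) \<in> borel_measurable Leb"
    using P.borel_measurable_nn_integral[of "\<lambda>s \<omega>. ennreal ((norm (\<phi> s \<omega>))\<^sup>2)" Leb]
    by (simp add: split_beta')
  then have "AE s in Leb. (\<integral>\<^sup>+\<omega>. ennreal ((norm (\<phi> s \<omega>))\<^sup>2) \<partial>M) \<noteq> \<infinity>"
    using fin by (intro nn_integral_PInf_AE) (simp_all add: sq_norm_integral_fst[OF p, symmetric])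
  then have "AE s in Leb. integrable M (\<phi> s)"
    by (elim AE_mp, intro AE_I2 impI P.integrable_of_nn_integral_power2_finite
        progressive_measurable[OF p]) (auto simp: less_top)
  then show ?thesis by (subst (asm) AE_restrict_space_iff) auto
qed

lemma L2F_stack:
  fixes \<phi> :: "real \<Rightarrow> 'a \<Rightarrow> real^'m::finite" and \<psi> :: "real \<Rightarrow> 'a \<Rightarrow> real^'n::finite"
  assumes "L2F M F T \<phi>" "L2F M F T \<psi>"
  shows "L2F M F T (\<lambda>s \<omega>. stack (\<phi> s \<omega>) (\<psi> s \<omega>))"
proof -
  have p: "progressive M F T \<phi>" "progressive M F T \<psi>"
    and "sq_norm_integral \<phi> < \<infinity>" "sq_norm_integral \<psi> < \<infinity>"
    using assms by (auto simp: L2F_iff)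
  note [measurable] = p[THEN progressive_joint_measurable]
  have "sq_norm_integral (\<lambda>s \<omega>. stack (\<phi> s \<omega>) (\<psi> s \<omega>)) = (\<integral>\<^sup>+p.
      ennreal ((norm (\<phi> (fst p) (snd p)))\<^sup>2) + ennreal ((norm (\<psi> (fst p) (snd p)))\<^sup>2) \<partial>(Leb \<Otimes>\<^sub>M M))"
    unfolding sq_norm_integral_def by (intro nn_integral_cong) (simp add: norm_stack_power2)
  also have "\<dots> = sq_norm_integral \<phi> + sq_norm_integral \<psi>"
    unfolding sq_norm_integral_def by (rule nn_integral_add) auto
  finally have "sq_norm_integral (\<lambda>s \<omega>. stack (\<phi> s \<omega>) (\<psi> s \<omega>)) = sq_norm_integral \<phi> + sq_norm_integral \<psi>" .
  with \<open>sq_norm_integral \<phi> < \<infinity>\<close> \<open>sq_norm_integral \<psi> < \<infinity>\<close> show ?thesis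
    using progressive_stack[OF p] by (simp add: L2F_iff)
qed

lemma L2F_vtop:
  fixes \<phi> :: "real \<Rightarrow> 'a \<Rightarrow> real^('m::finite + 'n::finite)"
  assumes "L2F M F T \<phi>"
  shows "L2F M F T (\<lambda>s \<omega>. vtop (\<phi> s \<omega>))" and "L2F M F T (\<lambda>s \<omega>. vbot (\<phi> s \<omega>))"
proof -
  have p: "progressive M F T \<phi>" and fin: "sq_norm_integral \<phi> < \<infinity>"
    using assms by (auto simp: L2F_iff)
  have "sq_norm_integral (\<lambda>s \<omega>. vtop (\<phi> s \<omega>)) \<le> sq_norm_integral \<phi>"
    and "sq_norm_integral (\<lambda>s \<omega>. vbot (\<phi> s \<omega>)) \<le> sq_norm_integral \<phi>"
    unfolding sq_norm_integral_def
    by (intro nn_integral_mono ennreal_leI power_mono norm_vtop_le norm_vbot_le norm_ge_zero)+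
  with fin show "L2F M F T (\<lambda>s \<omega>. vtop (\<phi> s \<omega>))" "L2F M F T (\<lambda>s \<omega>. vbot (\<phi> s \<omega>))"
    using progressive_vtop[OF p] by (auto simp: L2F_iff)
qed

lemma L2FC_sup_measurable:
  fixes \<phi> :: "real \<Rightarrow> 'a \<Rightarrow> 'v::euclidean_space"
  assumes "L2FC M F T \<phi>"
  shows "(\<lambda>\<omega>. SUP s\<in>{0..T}. ennreal ((norm (\<phi> s \<omega>))\<^sup>2)) \<in> borel_measurable M"
  using assms T_pos unfolding L2FC_def
  by (intro borel_measurable_SUP_continuous_paths) (auto intro: progressive_measurable)

lemma L2FC_imp_L2F:
  fixes \<phi> :: "real \<Rightarrow> 'a \<Rightarrow> 'v::euclidean_space"
  assumes "L2FC M F T \<phi>"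
  shows "L2F M F T \<phi>"
proof -
  have p: "progressive M F T \<phi>"
    and fin: "(\<integral>\<^sup>+\<omega>. (SUP s\<in>{0..T}. ennreal ((norm (\<phi> s \<omega>))\<^sup>2)) \<partial>M) < \<infinity>"
    using assms unfolding L2FC_def by auto
  note [measurable] = progressive_joint_measurable[OF p] L2FC_sup_measurable[OF assms]
  have "sq_norm_integral \<phi> = (\<integral>\<^sup>+\<omega>. (\<integral>\<^sup>+s. ennreal ((norm (\<phi> s \<omega>))\<^sup>2) \<partial>Leb) \<partial>M)"
    unfolding sq_norm_integral_def
    using LM.nn_integral_snd[of "\<lambda>p. ennreal ((norm (\<phi> (fst p) (snd p)))\<^sup>2)"] by simp
  also have "\<dots> \<le> (\<integral>\<^sup>+\<omega>. (\<integral>\<^sup>+s. (SUP s\<in>{0..T}. ennreal ((norm (\<phi> s \<omega>))\<^sup>2)) \<partial>Leb) \<partial>M)"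
    by (intro nn_integral_mono) (auto intro: SUP_upper)
  also have "\<dots> = ennreal T * (\<integral>\<^sup>+\<omega>. (SUP s\<in>{0..T}. ennreal ((norm (\<phi> s \<omega>))\<^sup>2)) \<partial>M)"
    using T_pos by (simp add: emeasure_restrict_space mult.commute nn_integral_cmult)
  also have "\<dots> < \<infinity>" using fin by (simp add: ennreal_mult_less_top)
  finally show ?thesis using p by (simp add: L2F_iff)
qed

lemma L2FC_integrable:
  fixes \<phi> :: "real \<Rightarrow> 'a \<Rightarrow> 'v::euclidean_space"
  assumes "L2FC M F T \<phi>" "s \<in> {0..T}"
  shows "integrable M (\<phi> s)"
proof (rule P.integrable_of_nn_integral_power2_finite)
  show "\<phi> s \<in> borel_measurable M"
    using assms progressive_measurable unfolding L2FC_def by blast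
  have "(\<integral>\<^sup>+\<omega>. ennreal ((norm (\<phi> s \<omega>))\<^sup>2) \<partial>M) \<le> (\<integral>\<^sup>+\<omega>. (SUP s\<in>{0..T}. ennreal ((norm (\<phi> s \<omega>))\<^sup>2)) \<partial>M)"
    using assms(2) by (intro nn_integral_mono) (auto intro: SUP_upper)
  also have "\<dots> < \<infinity>" using assms(1) unfolding L2FC_def by blast
  finally show "(\<integral>\<^sup>+\<omega>. ennreal ((norm (\<phi> s \<omega>))\<^sup>2) \<partial>M) < \<infinity>" .
qed

lemma L2FC_stack:
  fixes \<phi> :: "real \<Rightarrow> 'a \<Rightarrow> real^'m::finite" and \<psi> :: "real \<Rightarrow> 'a \<Rightarrow> real^'n::finite"
  assumes "L2FC M F T \<phi>" "L2FC M F T \<psi>"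
  shows "L2FC M F T (\<lambda>s \<omega>. stack (\<phi> s \<omega>) (\<psi> s \<omega>))"
proof -
  note [measurable] = assms[THEN L2FC_sup_measurable]
  have "continuous_on {0..T} (\<lambda>s. stack (\<phi> s \<omega>) (\<psi> s \<omega>))" if "\<omega> \<in> space M" for \<omega>
    unfolding stack_def
  proof (intro continuous_on_vec_lambda)
    fix r :: "'m + 'n"
    show "continuous_on {0..T} (\<lambda>s. case r of Inl i \<Rightarrow> \<phi> s \<omega> $ i | Inr i \<Rightarrow> \<psi> s \<omega> $ i)"
      using assms that unfolding L2FC_def by (cases r) (auto intro: continuous_on_component)
  qed
  moreover have "(\<integral>\<^sup>+\<omega>. (SUP s\<in>{0..T}. ennreal ((norm (stack (\<phi> s \<omega>) (\<psi> s \<omega>)))\<^sup>2)) \<partial>M)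
     \<le> (\<integral>\<^sup>+\<omega>. (SUP s\<in>{0..T}. ennreal ((norm (\<phi> s \<omega>))\<^sup>2))
        + (SUP s\<in>{0..T}. ennreal ((norm (\<psi> s \<omega>))\<^sup>2)) \<partial>M)"
    unfolding norm_stack_power2
    by (intro nn_integral_mono SUP_least)
      (auto intro!: add_mono SUP_upper)
  moreover have "\<dots> < \<infinity>"
    using assms unfolding L2FC_def by (simp add: nn_integral_add)
  ultimately show ?thesis
    using assms progressive_stack unfolding L2FC_def by (auto intro: order.strict_trans1)
qed

lemma L2FC_vtop:
  fixes \<phi> :: "real \<Rightarrow> 'a \<Rightarrow> real^('m::finite + 'n::finite)"
  assumes "L2FC M F T \<phi>"
  shows "L2FC M F T (\<lambda>s \<omega>. vtop (\<phi> s \<omega>))" and "L2FC M F T (\<lambda>s \<omega>. vbot (\<phi> s \<omega>))"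
proof -
  have "(\<integral>\<^sup>+\<omega>. (SUP s\<in>{0..T}. ennreal ((norm (vtop (\<phi> s \<omega>)))\<^sup>2)) \<partial>M)
      \<le> (\<integral>\<^sup>+\<omega>. (SUP s\<in>{0..T}. ennreal ((norm (\<phi> s \<omega>))\<^sup>2)) \<partial>M)"
    and "(\<integral>\<^sup>+\<omega>. (SUP s\<in>{0..T}. ennreal ((norm (vbot (\<phi> s \<omega>)))\<^sup>2)) \<partial>M)
      \<le> (\<integral>\<^sup>+\<omega>. (SUP s\<in>{0..T}. ennreal ((norm (\<phi> s \<omega>))\<^sup>2)) \<partial>M)"
    by (intro nn_integral_mono SUP_mono' ennreal_leI power_mono norm_vtop_le norm_vbot_le norm_ge_zero
        bexI[of _ "_ :: real"]; simp)+
  with assms show "L2FC M F T (\<lambda>s \<omega>. vtop (\<phi> s \<omega>))" "L2FC M F T (\<lambda>s \<omega>. vbot (\<phi> s \<omega>))"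
    using progressive_vtop unfolding L2FC_def
    by (auto intro: order.strict_trans1 continuous_on_compose2[OF linear_continuous_on]
        bounded_linear_vtop bounded_linear_vbot)
qed

end

section \<open>Stacking and projecting Ito equations\<close>

lemma ito_int_cong:
  assumes "ito_int M F W T \<sigma> t Y"
    and eq: "AE s in lborel. s \<in> {0..T} \<longrightarrow> (\<forall>\<omega>\<in>space M. \<sigma>' s \<omega> = \<sigma> s \<omega>)"
  shows "ito_int M F W T \<sigma>' t Y"
proof -
  obtain K tp \<xi> where ok: "\<forall>k. simp_ok M F T (K k) (tp k) (\<xi> k)"
    and c1: "(\<lambda>k. \<integral>\<^sup>+\<omega>. (\<integral>\<^sup>+s. ennreal ((\<sigma> s \<omega> - simp_proc (K k) (tp k) (\<xi> k) s \<omega>)\<^sup>2)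
                 * indicator {0..T} s \<partial>lborel) \<partial>M) \<longlonglongrightarrow> 0"
    and c2: "(\<lambda>k. \<integral>\<^sup>+\<omega>. ennreal ((Y \<omega> - simp_int W (K k) (tp k) (\<xi> k) t \<omega>)\<^sup>2) \<partial>M) \<longlonglongrightarrow> 0"
    and m: "Y \<in> borel_measurable M"
    using assms(1) unfolding ito_int_def by blast
  have "(\<integral>\<^sup>+s. ennreal ((\<sigma>' s \<omega> - simp_proc (K k) (tp k) (\<xi> k) s \<omega>)\<^sup>2) * indicator {0..T} s \<partial>lborel)
      = (\<integral>\<^sup>+s. ennreal ((\<sigma> s \<omega> - simp_proc (K k) (tp k) (\<xi> k) s \<omega>)\<^sup>2) * indicator {0..T} s \<partial>lborel)"
    if "\<omega> \<in> space M" for \<omega> k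
  proof (rule nn_integral_cong_AE)
    show "AE s in lborel. ennreal ((\<sigma>' s \<omega> - simp_proc (K k) (tp k) (\<xi> k) s \<omega>)\<^sup>2) * indicator {0..T} s
        = ennreal ((\<sigma> s \<omega> - simp_proc (K k) (tp k) (\<xi> k) s \<omega>)\<^sup>2) * indicator {0..T} s"
      using eq by eventually_elim (auto simp: that split: split_indicator)
  qed
  then show ?thesis
    unfolding ito_int_def using ok c1 c2 m
    by (intro conjI exI[of _ K] exI[of _ tp] exI[of _ \<xi>]) (auto cong: nn_integral_cong)
qed

lemma vito_cong:
  assumes "vito M F W T \<sigma> t Y"
    and "AE s in lborel. s \<in> {0..T} \<longrightarrow> (\<forall>\<omega>\<in>space M. \<sigma>' s \<omega> = \<sigma> s \<omega>)"
  shows "vito M F W T \<sigma>' t Y"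
  unfolding vito_def
proof
  fix i
  have "ito_int M F W T (\<lambda>s \<omega>. \<sigma> s \<omega> $ i) t (\<lambda>\<omega>. Y \<omega> $ i)"
    using assms(1) unfolding vito_def by blast
  then show "ito_int M F W T (\<lambda>s \<omega>. \<sigma>' s \<omega> $ i) t (\<lambda>\<omega>. Y \<omega> $ i)"
    by (rule ito_int_cong) (use assms(2) in \<open>eventually_elim, auto\<close>)
qed

lemma vito_stack:
  assumes "vito M F W T \<sigma>1 t Y1" "vito M F W T \<sigma>2 t Y2"
  shows "vito M F W T (\<lambda>s \<omega>. stack (\<sigma>1 s \<omega>) (\<sigma>2 s \<omega>)) t (\<lambda>\<omega>. stack (Y1 \<omega>) (Y2 \<omega>))"
  unfolding vito_def
proof
  fix r show "ito_int M F W T (\<lambda>s \<omega>. stack (\<sigma>1 s \<omega>) (\<sigma>2 s \<omega>) $ r) t (\<lambda>\<omega>. stack (Y1 \<omega>) (Y2 \<omega>) $ r)"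
    using assms unfolding vito_def by (cases r) (auto simp: stack_def)
qed

lemma vito_reindex:
  "vito M F W T \<sigma> t Y \<Longrightarrow> vito M F W T (\<lambda>s \<omega>. vec_reindex g (\<sigma> s \<omega>)) t (\<lambda>\<omega>. vec_reindex g (Y \<omega>))"
  unfolding vito_def vec_reindex_def by auto

lemma borel_measurable_indicator_Icc_scaleR:
  fixes f :: "real \<Rightarrow> 'v::euclidean_space"
  assumes "f \<in> borel_measurable (restrict_space lborel {0..T})" "t \<le> T"
  shows "(\<lambda>s. indicator {0..t} s *\<^sub>R f s) \<in> borel_measurable lborel"
proof -
  have [measurable]: "(\<lambda>s. indicator {0..T} s *\<^sub>R f s) \<in> borel_measurable lborel"
    using assms(1) by (simp add: borel_measurable_restrict_space_iff)
  have "(\<lambda>s. indicator {0..t} s *\<^sub>R (indicator {0..T} s *\<^sub>R f s)) \<in> borel_measurable lborel"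
    by measurable
  moreover have "(\<lambda>s. indicator {0..t} s *\<^sub>R (indicator {0..T} s *\<^sub>R f s)) = (\<lambda>s. indicator {0..t} s *\<^sub>R f s)"
    using assms(2) by (auto simp: indicator_def)
  ultimately show ?thesis by simp
qed

lemma set_integral_linear_image_AE:
  fixes a :: "real \<Rightarrow> 'b::euclidean_space" and b :: "real \<Rightarrow> 'c::euclidean_space"
  assumes h: "bounded_linear h"
    and b: "b \<in> borel_measurable (restrict_space lborel {0..T})" and "t \<le> T"
    and eq: "AE s in lborel. s \<in> {0..T} \<longrightarrow> b s = h (a s)"
    and a: "set_integrable lborel {0..t} a"
  shows "set_integrable lborel {0..t} b"
    and "(LINT s:{0..t}|lborel. b s) = h (LINT s:{0..t}|lborel. a s)"
proof -
  have m: "(\<lambda>s. indicator {0..t} s *\<^sub>R b s) \<in> borel_measurable lborel"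
    by (rule borel_measurable_indicator_Icc_scaleR[OF b \<open>t \<le> T\<close>])
  have int: "integrable lborel (\<lambda>s. h (indicator {0..t} s *\<^sub>R a s))"
    using integrable_bounded_linear[OF h a[unfolded set_integrable_def]] .
  have ae: "AE s in lborel. h (indicator {0..t} s *\<^sub>R a s) = indicator {0..t} s *\<^sub>R b s"
    using eq by eventually_elim
      (use \<open>t \<le> T\<close> in \<open>auto simp: linear_scale[OF bounded_linear.linear[OF h]] split: split_indicator\<close>)
  show "set_integrable lborel {0..t} b"
    unfolding set_integrable_def by (rule integrable_cong_AE_imp[OF int m ae])
  have "(LINT s:{0..t}|lborel. b s) = (LINT s|lborel. h (indicator {0..t} s *\<^sub>R a s))"
    unfolding set_lebesgue_integral_def
    by (rule integral_cong_AE[OF m borel_measurable_integrable[OF int]]) (use ae in \<open>auto elim: AE_mp\<close>)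
  also have "\<dots> = h (LINT s:{0..t}|lborel. a s)"
    unfolding set_lebesgue_integral_def by (rule integral_bounded_linear[OF h a[unfolded set_integrable_def]])
  finally show "(LINT s:{0..t}|lborel. b s) = h (LINT s:{0..t}|lborel. a s)" .
qed

lemma set_integral_stack:
  fixes f :: "real \<Rightarrow> real^'a::finite" and g :: "real \<Rightarrow> real^'b::finite"
  assumes "set_integrable N S f" "set_integrable N S g"
  shows "set_integrable N S (\<lambda>s. stack (f s) (g s))"
    and "(LINT s:S|N. stack (f s) (g s)) = stack (LINT s:S|N. f s) (LINT s:S|N. g s)"
  using integrable_stack[OF assms[unfolded set_integrable_def]]
    integral_stack[OF assms[unfolded set_integrable_def]]
  by (simp_all add: set_integrable_def set_lebesgue_integral_def scaleR_stack)

lemma sde_stack: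
  fixes x :: "real \<Rightarrow> 'a \<Rightarrow> real^'m::finite" and y :: "real \<Rightarrow> 'a \<Rightarrow> real^'n::finite"
  assumes sx: "sde M W T x b1 \<sigma>1" and sy: "sde M W T y b2 \<sigma>2"
    and b: "\<And>\<omega>. \<omega> \<in> space M \<Longrightarrow> (\<lambda>s. b s \<omega>) \<in> borel_measurable (restrict_space lborel {0..T})"
    and eq: "AE s in lborel. s \<in> {0..T} \<longrightarrow> (\<forall>\<omega>\<in>space M. b s \<omega> = stack (b1 s \<omega>) (b2 s \<omega>))"
  shows "sde M W T (\<lambda>s \<omega>. stack (x s \<omega>) (y s \<omega>)) b (\<lambda>s \<omega>. stack (\<sigma>1 s \<omega>) (\<sigma>2 s \<omega>))"
  unfolding sde_def
proof
  fix t assume t: "t \<in> {0..T}"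
  from sx t obtain Y1 where i1: "AE \<omega> in M. set_integrable lborel {0..t} (\<lambda>s. b1 s \<omega>)"
    and v1: "vito M (Fnat M W) W T \<sigma>1 t Y1"
    and e1: "AE \<omega> in M. x t \<omega> = x 0 \<omega> + (LINT s:{0..t}|lborel. b1 s \<omega>) + Y1 \<omega>"
    unfolding sde_def by blast
  from sy t obtain Y2 where i2: "AE \<omega> in M. set_integrable lborel {0..t} (\<lambda>s. b2 s \<omega>)"
    and v2: "vito M (Fnat M W) W T \<sigma>2 t Y2"
    and e2: "AE \<omega> in M. y t \<omega> = y 0 \<omega> + (LINT s:{0..t}|lborel. b2 s \<omega>) + Y2 \<omega>"
    unfolding sde_def by blast
  have drift: "set_integrable lborel {0..t} (\<lambda>s. b s \<omega>) \<and>
      (LINT s:{0..t}|lborel. b s \<omega>) = stack (LINT s:{0..t}|lborel. b1 s \<omega>) (LINT s:{0..t}|lborel. b2 s \<omega>)"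
    if \<omega>: "\<omega> \<in> space M" and j1: "set_integrable lborel {0..t} (\<lambda>s. b1 s \<omega>)"
      and j2: "set_integrable lborel {0..t} (\<lambda>s. b2 s \<omega>)" for \<omega>
  proof -
    have "AE s in lborel. s \<in> {0..T} \<longrightarrow> b s \<omega> = stack (b1 s \<omega>) (b2 s \<omega>)"
      using eq by eventually_elim (use \<omega> in auto)
    then show ?thesis
      using set_integral_linear_image_AE[OF bounded_linear_ident b[OF \<omega>] _ _ set_integral_stack(1)[OF j1 j2]]
        set_integral_stack(2)[OF j1 j2] t by auto
  qed
  show "(AE \<omega> in M. set_integrable lborel {0..t} (\<lambda>s. b s \<omega>)) \<and>
        (\<exists>Y. vito M (Fnat M W) W T (\<lambda>s \<omega>. stack (\<sigma>1 s \<omega>) (\<sigma>2 s \<omega>)) t Y \<and>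
          (AE \<omega> in M. stack (x t \<omega>) (y t \<omega>) = stack (x 0 \<omega>) (y 0 \<omega>) + (LINT s:{0..t}|lborel. b s \<omega>) + Y \<omega>))"
  proof (intro conjI exI)
    show "AE \<omega> in M. set_integrable lborel {0..t} (\<lambda>s. b s \<omega>)"
      using i1 i2 AE_space by eventually_elim (use drift in blast)
    show "vito M (Fnat M W) W T (\<lambda>s \<omega>. stack (\<sigma>1 s \<omega>) (\<sigma>2 s \<omega>)) t (\<lambda>\<omega>. stack (Y1 \<omega>) (Y2 \<omega>))"
      by (rule vito_stack[OF v1 v2])
    show "AE \<omega> in M. stack (x t \<omega>) (y t \<omega>)
        = stack (x 0 \<omega>) (y 0 \<omega>) + (LINT s:{0..t}|lborel. b s \<omega>) + stack (Y1 \<omega>) (Y2 \<omega>)"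
      using i1 i2 e1 e2 AE_space by eventually_elim (simp add: drift stack_add)
  qed
qed

lemma sde_reindex:
  fixes Y :: "real \<Rightarrow> 'a \<Rightarrow> real^'k::finite" and g :: "'m::finite \<Rightarrow> 'k"
  assumes sY: "sde M W T Y b \<sigma>"
    and b': "\<And>\<omega>. \<omega> \<in> space M \<Longrightarrow> (\<lambda>s. b' s \<omega>) \<in> borel_measurable (restrict_space lborel {0..T})"
    and eqb: "AE s in lborel. s \<in> {0..T} \<longrightarrow> (\<forall>\<omega>\<in>space M. b' s \<omega> = vec_reindex g (b s \<omega>))"
    and eq\<sigma>: "AE s in lborel. s \<in> {0..T} \<longrightarrow> (\<forall>\<omega>\<in>space M. \<sigma>' s \<omega> = vec_reindex g (\<sigma> s \<omega>))"
    and X: "\<And>s \<omega>. X s \<omega> = vec_reindex g (Y s \<omega>)"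
  shows "sde M W T X b' \<sigma>'"
  unfolding sde_def
proof
  fix t assume t: "t \<in> {0..T}"
  from sY t obtain Yi where i: "AE \<omega> in M. set_integrable lborel {0..t} (\<lambda>s. b s \<omega>)"
    and v: "vito M (Fnat M W) W T \<sigma> t Yi"
    and e: "AE \<omega> in M. Y t \<omega> = Y 0 \<omega> + (LINT s:{0..t}|lborel. b s \<omega>) + Yi \<omega>"
    unfolding sde_def by blast
  have drift: "set_integrable lborel {0..t} (\<lambda>s. b' s \<omega>) \<and>
      (LINT s:{0..t}|lborel. b' s \<omega>) = vec_reindex g (LINT s:{0..t}|lborel. b s \<omega>)"
    if \<omega>: "\<omega> \<in> space M" and j: "set_integrable lborel {0..t} (\<lambda>s. b s \<omega>)" for \<omega>
  proof -
    have "AE s in lborel. s \<in> {0..T} \<longrightarrow> b' s \<omega> = vec_reindex g (b s \<omega>)"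
      using eqb by eventually_elim (use \<omega> in auto)
    then show ?thesis
      using set_integral_linear_image_AE[OF bounded_linear_vec_reindex b'[OF \<omega>] _ _ j] t by auto
  qed
  show "(AE \<omega> in M. set_integrable lborel {0..t} (\<lambda>s. b' s \<omega>)) \<and>
        (\<exists>Y'. vito M (Fnat M W) W T \<sigma>' t Y' \<and>
          (AE \<omega> in M. X t \<omega> = X 0 \<omega> + (LINT s:{0..t}|lborel. b' s \<omega>) + Y' \<omega>))"
  proof (intro conjI exI)
    show "AE \<omega> in M. set_integrable lborel {0..t} (\<lambda>s. b' s \<omega>)"
      using i AE_space by eventually_elim (use drift in blast)
    show "vito M (Fnat M W) W T \<sigma>' t (\<lambda>\<omega>. vec_reindex g (Yi \<omega>))"
      by (rule vito_cong[OF vito_reindex[OF v]]) (use eq\<sigma> in \<open>auto elim: AE_mp\<close>)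
    show "AE \<omega> in M. X t \<omega> = X 0 \<omega> + (LINT s:{0..t}|lborel. b' s \<omega>) + vec_reindex g (Yi \<omega>)"
      using i e AE_space by eventually_elim (simp add: X drift vec_reindex_def vec_eq_iff)
  qed
qed

lemma sde_vtop:
  assumes "sde M W T Y b \<sigma>"
    and "\<And>\<omega>. \<omega> \<in> space M \<Longrightarrow> (\<lambda>s. b' s \<omega>) \<in> borel_measurable (restrict_space lborel {0..T})"
    and "AE s in lborel. s \<in> {0..T} \<longrightarrow> (\<forall>\<omega>\<in>space M. b' s \<omega> = vtop (b s \<omega>))"
    and "AE s in lborel. s \<in> {0..T} \<longrightarrow> (\<forall>\<omega>\<in>space M. \<sigma>' s \<omega> = vtop (\<sigma> s \<omega>))"
  shows "sde M W T (\<lambda>s \<omega>. vtop (Y s \<omega>)) b' \<sigma>'"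
  by (rule sde_reindex[where g=Inl]) (use assms in \<open>simp_all add: vtop_eq_vec_reindex\<close>)

lemma sde_vbot:
  assumes "sde M W T Y b \<sigma>"
    and "\<And>\<omega>. \<omega> \<in> space M \<Longrightarrow> (\<lambda>s. b' s \<omega>) \<in> borel_measurable (restrict_space lborel {0..T})"
    and "AE s in lborel. s \<in> {0..T} \<longrightarrow> (\<forall>\<omega>\<in>space M. b' s \<omega> = vbot (b s \<omega>))"
    and "AE s in lborel. s \<in> {0..T} \<longrightarrow> (\<forall>\<omega>\<in>space M. \<sigma>' s \<omega> = vbot (\<sigma> s \<omega>))"
  shows "sde M W T (\<lambda>s \<omega>. vbot (Y s \<omega>)) b' \<sigma>'"
  by (rule sde_reindex[where g=Inr]) (use assms in \<open>simp_all add: vbot_eq_vec_reindex\<close>)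

section \<open>Coefficients of the two systems\<close>

locale gbcs_coefficients =
  fixes c :: "('n::finite, 'k::finite, 'm::finite, 'p::finite) coef" and T :: real
  assumes coef_ok: "coef_ok c T"
    and bounded_R_inv: "bounded ((\<lambda>s. matrix_inv (cR c s)) ` {0..T})"
    and bounded_R_hat_inv: "bounded ((\<lambda>s. matrix_inv (cR c s + cRb c s)) ` {0..T})"
    and D0_coercive: "\<exists>\<delta>>0. AE s in lborel. s \<in> {0..T} \<longrightarrow>
           (\<forall>\<xi>. \<delta> * (\<xi> \<bullet> \<xi>) \<le> \<xi> \<bullet> ((cD0 c s ** transpose (cD0 c s)) *v \<xi>)) \<and>
           (\<forall>\<xi>. \<delta> * (\<xi> \<bullet> \<xi>) \<le> \<xi> \<bullet> ((D0h c s ** transpose (D0h c s)) *v \<xi>))"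
begin

lemma linf_ae_coefs:
  "linf_ae T (cA c)" "linf_ae T (cAb c)" "linf_ae T (cC c)" "linf_ae T (cCb c)"
  "linf_ae T (cB0 c)" "linf_ae T (cB0b c)" "linf_ae T (cD0 c)" "linf_ae T (cD0b c)"
  "linf_ae T (cBm c)" "linf_ae T (cBmb c)" "linf_ae T (cDm c)" "linf_ae T (cDmb c)"
  "linf_ae T (cR c)" "linf_ae T (cRb c)" "linf_ae T (cQ c)" "linf_ae T (cQb c)"
  using coef_ok unfolding coef_ok_def by (auto intro: linf_imp_linf_ae)

lemmas measurable_coefs [measurable] = linf_ae_coefs[THEN linf_ae_measurable]

lemma linf_ae_R_inv:
  "linf_ae T (\<lambda>s. matrix_inv (cR c s))" "linf_ae T (\<lambda>s. matrix_inv (cR c s + cRb c s))"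
  by (intro linf_ae_bounded bounded_R_inv bounded_R_hat_inv; measurable)+

lemmas linf_ae_intros = linf_ae_add linf_ae_diff linf_ae_uminus linf_ae_matrix_mult
  linf_ae_transpose linf_ae_bdiag linf_ae_const linf_ae_coefs linf_ae_R_inv

lemma linf_ae_feedback_coefs:
  "linf_ae T (By c)" "linf_ae T (Byb c)" "linf_ae T (Bz c)" "linf_ae T (Bzb c)"
  "linf_ae T (Dy c)" "linf_ae T (Dyb c)" "linf_ae T (Dz c)" "linf_ae T (Dzb c)"
  "linf_ae T (Ch c)" "linf_ae T (Dyh c)" "linf_ae T (Dzh c)" "linf_ae T (D0h c)"
  unfolding By_def[abs_def] Byb_def[abs_def] Bz_def[abs_def] Bzb_def[abs_def] Dy_def[abs_def]
    Dyb_def[abs_def] Dz_def[abs_def] Dzb_def[abs_def] Ch_def[abs_def] Dyh_def[abs_def]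
    Dzh_def[abs_def] D0h_def[abs_def] cm_def cmb_def
  by (intro linf_ae_intros)+

lemmas measurable_feedback_coefs [measurable] = linf_ae_feedback_coefs[THEN linf_ae_measurable]

lemma D0_right_inverse_AE:
  "AE s in lborel. s \<in> {0..T} \<longrightarrow>
     cD0 c s ** (transpose (cD0 c s) ** invDD c s) = mat 1 \<and>
     D0h c s ** (transpose (D0h c s) ** invDDh c s) = mat 1"
proof -
  obtain \<delta> where "0 < \<delta>" and coercive: "AE s in lborel. s \<in> {0..T} \<longrightarrow>
      (\<forall>\<xi>. \<delta> * (\<xi> \<bullet> \<xi>) \<le> \<xi> \<bullet> ((cD0 c s ** transpose (cD0 c s)) *v \<xi>)) \<and>
      (\<forall>\<xi>. \<delta> * (\<xi> \<bullet> \<xi>) \<le> \<xi> \<bullet> ((D0h c s ** transpose (D0h c s)) *v \<xi>))"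
    using D0_coercive by blast
  then show ?thesis
    by eventually_elim
      (auto simp: invDD_def invDDh_def matrix_mul_assoc
        intro!: matrix_inv_right invertible_coercive[OF \<open>0 < \<delta>\<close>])
qed

lemma linf_ae_invDD: "linf_ae T (invDD c)" "linf_ae T (invDDh c)"
proof -
  obtain \<delta> where "0 < \<delta>" and coercive: "AE s in lborel. s \<in> {0..T} \<longrightarrow>
      (\<forall>\<xi>. \<delta> * (\<xi> \<bullet> \<xi>) \<le> \<xi> \<bullet> ((cD0 c s ** transpose (cD0 c s)) *v \<xi>)) \<and>
      (\<forall>\<xi>. \<delta> * (\<xi> \<bullet> \<xi>) \<le> \<xi> \<bullet> ((D0h c s ** transpose (D0h c s)) *v \<xi>))"
    using D0_coercive by blast
  have "AE s in lborel. s \<in> {0..T} \<longrightarrow> norm (invDD c s) \<le> real CARD('n) * real CARD('n) / \<delta>"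
    and "AE s in lborel. s \<in> {0..T} \<longrightarrow> norm (invDDh c s) \<le> real CARD('n) * real CARD('n) / \<delta>"
    using coercive
    by (eventually_elim, auto simp: invDD_def invDDh_def intro!: norm_matrix_inv_coercive_le[OF \<open>0 < \<delta>\<close>])+
  moreover have "invDD c \<in> borel_measurable (restrict_space lborel {0..T})"
    and "invDDh c \<in> borel_measurable (restrict_space lborel {0..T})"
    unfolding invDD_def[abs_def] invDDh_def[abs_def] by measurable
  ultimately show "linf_ae T (invDD c)" "linf_ae T (invDDh c)"
    unfolding linf_ae_def by blast+
qed

lemmas measurable_invDD [measurable] = linf_ae_invDD[THEN linf_ae_measurable]

lemma linf_ae_D0_pseudo_inverse:
  "linf_ae T (\<lambda>s. transpose (cD0 c s) ** invDD c s)"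
  "linf_ae T (\<lambda>s. mat 1 - transpose (cD0 c s) ** invDD c s ** cD0 c s)"
  "linf_ae T (\<lambda>s. transpose (D0h c s) ** invDDh c s)"
  "linf_ae T (\<lambda>s. mat 1 - transpose (D0h c s) ** invDDh c s ** D0h c s)"
  by (intro linf_ae_intros linf_ae_invDD linf_ae_feedback_coefs)+

lemma measurable_backward_coefs [measurable]:
  "bA c \<in> borel_measurable (restrict_space lborel {0..T})"
  "bAb c \<in> borel_measurable (restrict_space lborel {0..T})"
  "bC c \<in> borel_measurable (restrict_space lborel {0..T})"
  "bCb c \<in> borel_measurable (restrict_space lborel {0..T})"
  "bB c \<in> borel_measurable (restrict_space lborel {0..T})"
  "bBb c \<in> borel_measurable (restrict_space lborel {0..T})"
  unfolding bA_def[abs_def] bAb_def[abs_def] bC_def[abs_def] bCb_def[abs_def] bB_def[abs_def]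
    bBb_def[abs_def] A1_def A1h_def A2_def A2h_def C1_def C1h_def C2_def C2h_def B1_def B1h_def
    Ah_def B0h_def Byh_def Bzh_def
  by measurable

end

text \<open>In the pointwise identities below a primed variable stands for the mean of the unprimed one,
  e.g. \<open>x'\<close> for \<open>E[x*(s)]\<close>.\<close>

lemma right_inverse_solves:
  fixes D :: "real^'k::finite^'n::finite" and K :: "real^'n^'k"
  assumes "D ** K = mat 1"
  shows "D *v (K *v w + (mat 1 - K ** D) *v v) = w"
proof -
  have "D *v (K *v w) = w" and "D *v ((K ** D) *v v) = D *v v"
    by (simp_all add: matrix_vector_mul_assoc matrix_mul_assoc assms)
  then show ?thesis
    by (simp add: matrix_vector_right_distrib matrix_vector_mult_diff_rdistrib
        matrix_vector_mult_diff_distrib)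
qed

lemmas matrix_vector_expand = matrix_vector_mul_assoc[symmetric] matrix_vector_mult_add_rdistrib
  matrix_vector_mult_diff_rdistrib matrix_vector_right_distrib matrix_vector_mult_diff_distrib
  matrix_vector_mult_uminus matrix_vector_mul_lid matrix_vector_mult_0 vtop_add vbot_add
  blk2_mult_stack vstack_mult

lemma qfrom_eq_gdiff: "qfrom c M u x y z = gdiff c M x y z u"
  by (simp add: fun_eq_iff qfrom_def gdiff_def Ch_def Dyh_def Dzh_def D0h_def
      matrix_vector_mult_add_rdistrib matrix_vector_mult_diff_distrib algebra_simps)

lemma vbot_backward_drift:
  "vbot (bA c s *v stack x y + bAb c s *v stack x' y' + bC c s *v stack q z + bCb c s *v stack q' z'
      + bB c s *v v + bBb c s *v v')
   = - (cQ c s *v x + cQb c s *v x' + transpose (cdiag (cA c s)) *v y + transpose (cdiag (cAb c s)) *v y'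
      + transpose (cdiag (cC c s)) *v z + transpose (cdiag (cCb c s)) *v z')"
  unfolding bA_def bAb_def bC_def bCb_def bB_def bBb_def
  by (simp only: matrix_vector_expand) (simp add: algebra_simps)

lemma vtop_backward_drift_qfrom:
  assumes "q = cC c s *v (x - x') + Dy c s *v (y - y') + Dz c s *v (z - z') + cD0 c s *v (u - u')
      + Ch c s *v x' + Dyh c s *v y' + Dzh c s *v z' + D0h c s *v u'"
    and "q' = Ch c s *v x' + Dyh c s *v y' + Dzh c s *v z' + D0h c s *v u'"
  shows "vtop (bA c s *v stack x y + bAb c s *v stack x' y' + bC c s *v stack q z
      + bCb c s *v stack q' z' + bB c s *v u + bBb c s *v u')
   = cA c s *v x + cAb c s *v x' + By c s *v y + Byb c s *v y' + Bz c s *v z + Bzb c s *v z'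
      + cB0 c s *v u + cB0b c s *v u'"
  unfolding assms bA_def bAb_def bC_def bCb_def bB_def bBb_def A1_def A1h_def A2_def A2h_def
    C1_def C1h_def C2_def C2h_def B1_def B1h_def Ah_def Ch_def B0h_def Byh_def Bzh_def Dyh_def Dzh_def
  by (simp only: matrix_vector_expand) (simp add: algebra_simps)

lemma gdrift_ufrom_eq_vtop_backward_drift:
  assumes "u = (transpose (cD0 c s) ** invDD c s) *v
        ((q - q') - cC c s *v (x - x') - Dy c s *v (y - y') - Dz c s *v (z - z'))
      + (mat 1 - transpose (cD0 c s) ** invDD c s ** cD0 c s) *v (v - v')
      + (transpose (D0h c s) ** invDDh c s) *v (q' - Ch c s *v x' - Dyh c s *v y' - Dzh c s *v z')
      + (mat 1 - transpose (D0h c s) ** invDDh c s ** D0h c s) *v v'"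
    and "u' = (transpose (D0h c s) ** invDDh c s) *v (q' - Ch c s *v x' - Dyh c s *v y' - Dzh c s *v z')
      + (mat 1 - transpose (D0h c s) ** invDDh c s ** D0h c s) *v v'"
  shows "cA c s *v x + cAb c s *v x' + By c s *v y + Byb c s *v y' + Bz c s *v z + Bzb c s *v z'
      + cB0 c s *v u + cB0b c s *v u'
   = vtop (bA c s *v stack x y + bAb c s *v stack x' y' + bC c s *v stack q z + bCb c s *v stack q' z'
      + bB c s *v v + bBb c s *v v')"
  unfolding assms bA_def bAb_def bC_def bCb_def bB_def bBb_def A1_def A1h_def A2_def A2h_def
    C1_def C1h_def C2_def C2h_def B1_def B1h_def Ah_def Ch_def B0h_def Byh_def Bzh_def Dyh_def Dzh_def
  by (simp only: matrix_vector_expand) (simp add: algebra_simps)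

text \<open>Only here are the right inverses of \<open>cD0\<close> and \<open>D0h\<close> needed: the fluctuation and the mean
  of \<open>D\<^sub>0 u\<close> are prescribed separately.\<close>

lemma gdiff_ufrom:
  assumes u: "u = (transpose (cD0 c s) ** invDD c s) *v
        ((q - q') - cC c s *v (x - x') - Dy c s *v (y - y') - Dz c s *v (z - z'))
      + (mat 1 - transpose (cD0 c s) ** invDD c s ** cD0 c s) *v (v - v')
      + (transpose (D0h c s) ** invDDh c s) *v (q' - Ch c s *v x' - Dyh c s *v y' - Dzh c s *v z')
      + (mat 1 - transpose (D0h c s) ** invDDh c s ** D0h c s) *v v'"
    and u': "u' = (transpose (D0h c s) ** invDDh c s) *v (q' - Ch c s *v x' - Dyh c s *v y' - Dzh c s *v z')
      + (mat 1 - transpose (D0h c s) ** invDDh c s ** D0h c s) *v v'"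
    and inv: "cD0 c s ** (transpose (cD0 c s) ** invDD c s) = mat 1"
    and inv_hat: "D0h c s ** (transpose (D0h c s) ** invDDh c s) = mat 1"
  shows "cC c s *v x + cCb c s *v x' + Dy c s *v y + Dyb c s *v y' + Dz c s *v z + Dzb c s *v z'
      + cD0 c s *v u + cD0b c s *v u' = q"
proof -
  define w where "w = (q - q') - cC c s *v (x - x') - Dy c s *v (y - y') - Dz c s *v (z - z')"
  define w_hat where "w_hat = q' - Ch c s *v x' - Dyh c s *v y' - Dzh c s *v z'"
  have "cD0 c s *v (u - u') = w"
    using right_inverse_solves[OF inv, of w "v - v'"]
    by (simp add: u u' w_def matrix_mul_assoc)
  moreover have "D0h c s *v u' = w_hat"
    using right_inverse_solves[OF inv_hat, of w_hat v']
    by (simp add: u' w_hat_def matrix_mul_assoc)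
  ultimately have "cD0 c s *v u + cD0b c s *v u' = w + w_hat"
    by (simp add: D0h_def matrix_vector_mult_diff_distrib matrix_vector_mult_add_rdistrib algebra_simps)
  then show ?thesis
    unfolding w_def w_hat_def Ch_def Dyh_def Dzh_def
    by (simp add: matrix_vector_mult_add_rdistrib matrix_vector_mult_diff_distrib algebra_simps)
qed

section \<open>The equivalence\<close>

lemma subalgebra_Fnat:
  assumes "\<And>s. W s \<in> borel_measurable M"
  shows "subalgebra M (Fnat M W t)"
proof -
  let ?G = "(\<Union>s\<in>{0..t}. {W s -` B \<inter> space M | B. B \<in> sets borel}) \<union> null_sets M"
  have G: "?G \<subseteq> sets M" using assms by (auto simp: measurable_sets)
  then have "?G \<subseteq> Pow (space M)" using sets.sets_into_space by blast
  then have "sets (Fnat M W t) = sigma_sets (space M) ?G"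
    unfolding Fnat_def by (simp add: sets_measure_of)
  also have "\<dots> \<subseteq> sets M" using G by (rule sets.sigma_sets_subset)
  finally show ?thesis
    unfolding subalgebra_def by (simp add: Fnat_def space_measure_of_conv)
qed

lemma integral_matrix_vector_mult:
  "integrable N f \<Longrightarrow> (LINT \<omega>|N. (A::real^'m::finite^'n::finite) *v f \<omega>) = A *v (LINT \<omega>|N. f \<omega>)"
  by (rule integral_bounded_linear[OF matrix_vector_mul_bounded_linear])

lemma integrable_matrix_vector_mult:
  "integrable N f \<Longrightarrow> integrable N (\<lambda>\<omega>. (A::real^'m::finite^'n::finite) *v f \<omega>)"
  by (rule integrable_bounded_linear[OF matrix_vector_mul_bounded_linear])

lemma mexp_stack:
  "integrable M (x s) \<Longrightarrow> integrable M (y s) \<Longrightarrow>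
   mexp M (\<lambda>s \<omega>. stack (x s \<omega>) (y s \<omega>)) s = stack (mexp M x s) (mexp M y s)"
  unfolding mexp_def by (rule integral_stack)

lemma mexp_vtop:
  "integrable M (Y s) \<Longrightarrow> mexp M (\<lambda>s \<omega>. vtop (Y s \<omega>)) s = vtop (mexp M Y s)"
  "integrable M (Y s) \<Longrightarrow> mexp M (\<lambda>s \<omega>. vbot (Y s \<omega>)) s = vbot (mexp M Y s)"
  unfolding mexp_def by (simp_all add: integral_bounded_linear bounded_linear_vtop bounded_linear_vbot)

locale mfgbcs_setting = progressive_L2 M "Fnat M W" T + gbcs_coefficients c T
  for M :: "'a measure" and W :: "real \<Rightarrow> 'a \<Rightarrow> real" and T :: real
    and c :: "('n::finite, 'k::finite, 'm::finite, 'p::finite) coef"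
begin

lemmas integral_linear_simps = Bochner_Integration.integral_add Bochner_Integration.integral_diff
  integral_matrix_vector_mult Bochner_Integration.integrable_add Bochner_Integration.integrable_diff
  integrable_matrix_vector_mult P.integrable_const P.prob_space

lemma mexp_qfrom:
  assumes "integrable M (u s)" "integrable M (x s)" "integrable M (y s)" "integrable M (z s)"
  shows "integrable M (qfrom c M u x y z s)"
    and "mexp M (qfrom c M u x y z) s = Ch c s *v mexp M x s + Dyh c s *v mexp M y s
      + Dzh c s *v mexp M z s + D0h c s *v mexp M u s"
  using assms unfolding qfrom_def[abs_def] mexp_def by (simp_all add: integral_linear_simps mexp_def)

lemma mexp_ufrom:
  assumes "integrable M (v s)" "integrable M (x s)" "integrable M (y s)" "integrable M (q s)"
    "integrable M (z s)"
  shows "mexp M (ufrom c M v x y q z) s = (transpose (D0h c s) ** invDDh c s) *v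
      (mexp M q s - Ch c s *v mexp M x s - Dyh c s *v mexp M y s - Dzh c s *v mexp M z s)
    + (mat 1 - transpose (D0h c s) ** invDDh c s ** D0h c s) *v mexp M v s"
proof -
  have "mexp M (ufrom c M v x y q z) s = (LINT \<omega>|M. ufrom c M v x y q z s \<omega>)"
    by (rule mexp_def)
  also have "\<dots> = (transpose (D0h c s) ** invDDh c s) *v
      (mexp M q s - Ch c s *v mexp M x s - Dyh c s *v mexp M y s - Dzh c s *v mexp M z s)
    + (mat 1 - transpose (D0h c s) ** invDDh c s ** D0h c s) *v mexp M v s"
    using assms by (simp add: ufrom_def integral_linear_simps mexp_def)
  finally show ?thesis .
qed

definition bwd_drift :: "(real \<Rightarrow> 'a \<Rightarrow> real^'k) \<Rightarrow> (real \<Rightarrow> 'a \<Rightarrow> real^('n + ('p \<times> 'n)))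
    \<Rightarrow> (real \<Rightarrow> 'a \<Rightarrow> real^('n + ('p \<times> 'n))) \<Rightarrow> real \<Rightarrow> 'a \<Rightarrow> real^('n + ('p \<times> 'n))" where
  "bwd_drift v Y Z s \<omega> = bA c s *v Y s \<omega> + bAb c s *v mexp M Y s + bC c s *v Z s \<omega>
     + bCb c s *v mexp M Z s + bB c s *v v s \<omega> + bBb c s *v mexp M v s"

lemma bwd_iff:
  "bwd c M W T v Y Z \<longleftrightarrow> sde M W T Y (bwd_drift v Y Z) Z \<and>
     (AE \<omega> in M. vbot (Y T \<omega>) = cH c *v vtop (Y T \<omega>) + cHb c *v mexp M (\<lambda>s \<omega>. vtop (Y s \<omega>)) T)"
  unfolding bwd_def bwd_drift_def[abs_def] ..

lemma measurable_bwd_drift_path: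
  assumes "progressive M (Fnat M W) T v" "progressive M (Fnat M W) T Y" "progressive M (Fnat M W) T Z"
    and "\<omega> \<in> space M"
  shows "(\<lambda>s. bwd_drift v Y Z s \<omega>) \<in> borel_measurable Leb"
proof -
  note [measurable] = assms(1-3)[THEN progressive_path_measurable, OF assms(4)]
    assms(1-3)[THEN borel_measurable_mexp]
  show ?thesis unfolding bwd_drift_def by measurable
qed

lemma measurable_forward_drift_paths:
  assumes "progressive M (Fnat M W) T u" "progressive M (Fnat M W) T x"
    and "progressive M (Fnat M W) T y" "progressive M (Fnat M W) T z" and "\<omega> \<in> space M"
  shows "(\<lambda>s. gdrift c M x y z u s \<omega>) \<in> borel_measurable Leb"
    and "(\<lambda>s. ydrift c M x y z s \<omega>) \<in> borel_measurable Leb"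
proof -
  note [measurable] = assms(1-4)[THEN progressive_path_measurable, OF assms(5)]
    assms(1-4)[THEN borel_measurable_mexp]
  show "(\<lambda>s. gdrift c M x y z u s \<omega>) \<in> borel_measurable Leb" unfolding gdrift_def by measurable
  show "(\<lambda>s. ydrift c M x y z s \<omega>) \<in> borel_measurable Leb" unfolding ydrift_def by measurable
qed

lemma L2F_gdiff:
  assumes "L2F M (Fnat M W) T u" "L2F M (Fnat M W) T x" "L2F M (Fnat M W) T y" "L2F M (Fnat M W) T z"
  shows "L2F M (Fnat M W) T (gdiff c M x y z u)"
  using assms unfolding gdiff_def[abs_def]
  by (intro L2F_add L2F_matrix_vector_mult L2F_mexp linf_ae_coefs linf_ae_feedback_coefs)

lemma L2F_ufrom:
  assumes "L2F M (Fnat M W) T v" "L2F M (Fnat M W) T x" "L2F M (Fnat M W) T y"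
    "L2F M (Fnat M W) T q" "L2F M (Fnat M W) T z"
  shows "L2F M (Fnat M W) T (ufrom c M v x y q z)"
  using assms unfolding ufrom_def[abs_def]
  by (intro L2F_add L2F_matrix_vector_mult L2F_mexp linf_ae_coefs linf_ae_feedback_coefs
      linf_ae_D0_pseudo_inverse)

lemma bwd_drift_stack_AE:
  fixes u :: "real \<Rightarrow> 'a \<Rightarrow> real^'k" and x :: "real \<Rightarrow> 'a \<Rightarrow> real^'n"
    and y z :: "real \<Rightarrow> 'a \<Rightarrow> real^('p \<times> 'n)"
  assumes "L2F M (Fnat M W) T u" "L2FC M (Fnat M W) T x" "L2FC M (Fnat M W) T y"
    "L2F M (Fnat M W) T z"
  defines "q \<equiv> qfrom c M u x y z"
  shows "AE s in lborel. s \<in> {0..T} \<longrightarrow> (\<forall>\<omega>\<in>space M.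
    bwd_drift u (\<lambda>s \<omega>. stack (x s \<omega>) (y s \<omega>)) (\<lambda>s \<omega>. stack (q s \<omega>) (z s \<omega>)) s \<omega>
      = stack (gdrift c M x y z u s \<omega>) (ydrift c M x y z s \<omega>))"
  using assms(1,4)[THEN L2F_integrable_AE]
proof eventually_elim
  case (elim s)
  show ?case
  proof (intro impI ballI)
    fix \<omega> assume s: "s \<in> {0..T}" and "\<omega> \<in> space M"
    have iu: "integrable M (u s)" and iz: "integrable M (z s)" using elim s by auto
    have ix: "integrable M (x s)" and iy: "integrable M (y s)"
      using assms(2,3)[THEN L2FC_integrable, OF s] .
    have iq: "integrable M (q s)" and mq: "mexp M q s = Ch c s *v mexp M x s + Dyh c s *v mexp M y s
        + Dzh c s *v mexp M z s + D0h c s *v mexp M u s"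
      unfolding q_def using mexp_qfrom[where u=u and x=x and y=y and z=z, OF iu ix iy iz] by auto
    show "bwd_drift u (\<lambda>s \<omega>. stack (x s \<omega>) (y s \<omega>)) (\<lambda>s \<omega>. stack (q s \<omega>) (z s \<omega>)) s \<omega>
      = stack (gdrift c M x y z u s \<omega>) (ydrift c M x y z s \<omega>)"
      unfolding bwd_drift_def mexp_stack[where x=x and y=y, OF ix iy] mexp_stack[where x=q and y=z, OF iq iz] gdrift_def ydrift_def
      using mq
      by (subst stack_vtop_vbot[symmetric], subst vtop_backward_drift_qfrom)
        (simp_all add: q_def qfrom_def vbot_backward_drift)
  qed
qed

lemma mfgbcs_imp_bwd:
  fixes u :: "real \<Rightarrow> 'a \<Rightarrow> real^'k" and x :: "real \<Rightarrow> 'a \<Rightarrow> real^'n"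
    and y z :: "real \<Rightarrow> 'a \<Rightarrow> real^('p \<times> 'n)"
  assumes "L2F M (Fnat M W) T u" "L2FC M (Fnat M W) T x" "L2FC M (Fnat M W) T y"
    "L2F M (Fnat M W) T z" and "mfgbcs c M W T u x y z"
  defines "Y \<equiv> \<lambda>s \<omega>. stack (x s \<omega>) (y s \<omega>)" and "Z \<equiv> \<lambda>s \<omega>. stack (qfrom c M u x y z s \<omega>) (z s \<omega>)"
  shows "L2FC M (Fnat M W) T Y \<and> L2F M (Fnat M W) T Z \<and> bwd c M W T u Y Z"
proof -
  have LY: "L2FC M (Fnat M W) T Y" unfolding Y_def by (rule L2FC_stack[OF assms(2,3)])
  have LZ: "L2F M (Fnat M W) T Z"
    unfolding Z_def qfrom_eq_gdiff using assms(1-4)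
    by (intro L2F_stack L2F_gdiff) (auto intro: L2FC_imp_L2F)
  have "sde M W T (\<lambda>s \<omega>. stack (x s \<omega>) (y s \<omega>)) (bwd_drift u Y Z)
      (\<lambda>s \<omega>. stack (gdiff c M x y z u s \<omega>) (z s \<omega>))"
  proof (rule sde_stack)
    show "sde M W T x (gdrift c M x y z u) (gdiff c M x y z u)" "sde M W T y (ydrift c M x y z) z"
      using assms(5) unfolding mfgbcs_def by auto
    show "(\<lambda>s. bwd_drift u Y Z s \<omega>) \<in> borel_measurable Leb" if "\<omega> \<in> space M" for \<omega>
      using assms(1) LY LZ that unfolding L2F_def L2FC_def by (blast intro: measurable_bwd_drift_path)
    show "AE s in lborel. s \<in> {0..T} \<longrightarrow> (\<forall>\<omega>\<in>space M.
        bwd_drift u Y Z s \<omega> = stack (gdrift c M x y z u s \<omega>) (ydrift c M x y z s \<omega>))"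
      unfolding Y_def Z_def by (rule bwd_drift_stack_AE[OF assms(1-4)])
  qed
  moreover have "AE \<omega> in M. y T \<omega> = cH c *v x T \<omega> + cHb c *v mexp M x T"
    using assms(5) unfolding mfgbcs_def by auto
  ultimately show ?thesis
    using LY LZ unfolding bwd_iff by (simp add: Y_def Z_def qfrom_eq_gdiff)
qed

end

context mfgbcs_setting
begin

lemma forward_drifts_at:
  fixes v :: "real \<Rightarrow> 'a \<Rightarrow> real^'k" and Y Z :: "real \<Rightarrow> 'a \<Rightarrow> real^('n + ('p \<times> 'n))"
  assumes iv: "integrable M (v s)" and iY: "integrable M (Y s)" and iZ: "integrable M (Z s)"
    and inv: "cD0 c s ** (transpose (cD0 c s) ** invDD c s) = mat 1"
    and inv_hat: "D0h c s ** (transpose (D0h c s) ** invDDh c s) = mat 1"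
  defines "x \<equiv> \<lambda>s \<omega>. vtop (Y s \<omega>)" and "y \<equiv> \<lambda>s \<omega>. vbot (Y s \<omega>)"
    and "q \<equiv> \<lambda>s \<omega>. vtop (Z s \<omega>)" and "z \<equiv> \<lambda>s \<omega>. vbot (Z s \<omega>)"
  shows "gdrift c M x y z (ufrom c M v x y q z) s \<omega> = vtop (bwd_drift v Y Z s \<omega>)"
    and "gdiff c M x y z (ufrom c M v x y q z) s \<omega> = vtop (Z s \<omega>)"
    and "ydrift c M x y z s \<omega> = vbot (bwd_drift v Y Z s \<omega>)"
proof -
  have ix: "integrable M (x s)" and iy: "integrable M (y s)"
    and iq: "integrable M (q s)" and iz: "integrable M (z s)"
    unfolding x_def y_def q_def z_def
    by (auto intro: integrable_bounded_linear bounded_linear_vtop bounded_linear_vbot iY iZ)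
  have mY: "mexp M Y s = stack (mexp M x s) (mexp M y s)"
    and mZ: "mexp M Z s = stack (mexp M q s) (mexp M z s)"
    unfolding x_def y_def q_def z_def mexp_vtop[where Y=Y, OF iY] mexp_vtop[where Y=Z, OF iZ] by simp_all
  have Ys: "Y s \<omega> = stack (x s \<omega>) (y s \<omega>)" and Zs: "Z s \<omega> = stack (q s \<omega>) (z s \<omega>)"
    unfolding x_def y_def q_def z_def by simp_all
  note mu = mexp_ufrom[where v=v and x=x and y=y and q=q and z=z, OF iv ix iy iq iz]
  have drift: "bwd_drift v Y Z s \<omega> = bA c s *v stack (x s \<omega>) (y s \<omega>)
      + bAb c s *v stack (mexp M x s) (mexp M y s) + bC c s *v stack (q s \<omega>) (z s \<omega>)
      + bCb c s *v stack (mexp M q s) (mexp M z s) + bB c s *v v s \<omega> + bBb c s *v mexp M v s"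
    unfolding bwd_drift_def by (simp only: Ys Zs mY mZ)
  show "gdrift c M x y z (ufrom c M v x y q z) s \<omega> = vtop (bwd_drift v Y Z s \<omega>)"
    unfolding drift gdrift_def
    by (rule gdrift_ufrom_eq_vtop_backward_drift) (simp_all only: ufrom_def mu)
  show "gdiff c M x y z (ufrom c M v x y q z) s \<omega> = vtop (Z s \<omega>)"
    unfolding gdiff_def Zs vtop_stack
    by (rule gdiff_ufrom[OF _ _ inv inv_hat]) (simp_all only: ufrom_def mu)
  show "ydrift c M x y z s \<omega> = vbot (bwd_drift v Y Z s \<omega>)"
    unfolding drift ydrift_def by (rule vbot_backward_drift[symmetric])
qed

lemma forward_drifts_AE:
  fixes v :: "real \<Rightarrow> 'a \<Rightarrow> real^'k" and Y Z :: "real \<Rightarrow> 'a \<Rightarrow> real^('n + ('p \<times> 'n))"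
  assumes "L2F M (Fnat M W) T v" "L2FC M (Fnat M W) T Y" "L2F M (Fnat M W) T Z"
  defines "x \<equiv> \<lambda>s \<omega>. vtop (Y s \<omega>)" and "y \<equiv> \<lambda>s \<omega>. vbot (Y s \<omega>)"
    and "q \<equiv> \<lambda>s \<omega>. vtop (Z s \<omega>)" and "z \<equiv> \<lambda>s \<omega>. vbot (Z s \<omega>)"
  shows "AE s in lborel. s \<in> {0..T} \<longrightarrow>
      (\<forall>\<omega>\<in>space M. gdrift c M x y z (ufrom c M v x y q z) s \<omega> = vtop (bwd_drift v Y Z s \<omega>))"
    and "AE s in lborel. s \<in> {0..T} \<longrightarrow>
      (\<forall>\<omega>\<in>space M. gdiff c M x y z (ufrom c M v x y q z) s \<omega> = vtop (Z s \<omega>))"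
    and "AE s in lborel. s \<in> {0..T} \<longrightarrow>
      (\<forall>\<omega>\<in>space M. ydrift c M x y z s \<omega> = vbot (bwd_drift v Y Z s \<omega>))"
proof -
  have good: "AE s in lborel. s \<in> {0..T} \<longrightarrow>
      integrable M (v s) \<and> integrable M (Y s) \<and> integrable M (Z s) \<and>
      cD0 c s ** (transpose (cD0 c s) ** invDD c s) = mat 1 \<and>
      D0h c s ** (transpose (D0h c s) ** invDDh c s) = mat 1"
    using D0_right_inverse_AE assms(1,3)[THEN L2F_integrable_AE]
    by eventually_elim (auto intro: L2FC_integrable[OF assms(2)])
  show "AE s in lborel. s \<in> {0..T} \<longrightarrow>
      (\<forall>\<omega>\<in>space M. gdrift c M x y z (ufrom c M v x y q z) s \<omega> = vtop (bwd_drift v Y Z s \<omega>))"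
    and "AE s in lborel. s \<in> {0..T} \<longrightarrow>
      (\<forall>\<omega>\<in>space M. gdiff c M x y z (ufrom c M v x y q z) s \<omega> = vtop (Z s \<omega>))"
    and "AE s in lborel. s \<in> {0..T} \<longrightarrow>
      (\<forall>\<omega>\<in>space M. ydrift c M x y z s \<omega> = vbot (bwd_drift v Y Z s \<omega>))"
    using good unfolding x_def y_def q_def z_def
    by (eventually_elim, simp add: forward_drifts_at)+
qed

lemma bwd_imp_mfgbcs:
  fixes v :: "real \<Rightarrow> 'a \<Rightarrow> real^'k" and Y Z :: "real \<Rightarrow> 'a \<Rightarrow> real^('n + ('p \<times> 'n))"
  assumes "L2F M (Fnat M W) T v" "L2FC M (Fnat M W) T Y" "L2F M (Fnat M W) T Z"
    and "bwd c M W T v Y Z"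
  defines "x \<equiv> \<lambda>s \<omega>. vtop (Y s \<omega>)" and "y \<equiv> \<lambda>s \<omega>. vbot (Y s \<omega>)"
    and "q \<equiv> \<lambda>s \<omega>. vtop (Z s \<omega>)" and "z \<equiv> \<lambda>s \<omega>. vbot (Z s \<omega>)"
  shows "L2F M (Fnat M W) T (ufrom c M v x y q z) \<and> L2FC M (Fnat M W) T x \<and> L2FC M (Fnat M W) T y
    \<and> L2F M (Fnat M W) T z \<and> mfgbcs c M W T (ufrom c M v x y q z) x y z"
proof -
  have Lx: "L2FC M (Fnat M W) T x" and Ly: "L2FC M (Fnat M W) T y"
    unfolding x_def y_def using L2FC_vtop[OF assms(2)] by auto
  have Lq: "L2F M (Fnat M W) T q" and Lz: "L2F M (Fnat M W) T z"
    unfolding q_def z_def using L2F_vtop[OF assms(3)] by auto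
  have Lu: "L2F M (Fnat M W) T (ufrom c M v x y q z)"
    using L2F_ufrom[OF assms(1) L2FC_imp_L2F[OF Lx] L2FC_imp_L2F[OF Ly] Lq Lz] .
  have sY: "sde M W T Y (bwd_drift v Y Z) Z"
    and terminal: "AE \<omega> in M. y T \<omega> = cH c *v x T \<omega> + cHb c *v mexp M x T"
    using assms(4) unfolding bwd_iff x_def y_def by auto
  note drifts = forward_drifts_AE[OF assms(1-3), folded x_def y_def q_def z_def]
  have paths: "(\<lambda>s. gdrift c M x y z (ufrom c M v x y q z) s \<omega>) \<in> borel_measurable Leb"
      "(\<lambda>s. ydrift c M x y z s \<omega>) \<in> borel_measurable Leb" if "\<omega> \<in> space M" for \<omega>
    using measurable_forward_drift_paths[OF _ _ _ _ that] Lu Lx Ly Lz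
    unfolding L2F_def L2FC_def by blast+
  have "sde M W T x (gdrift c M x y z (ufrom c M v x y q z)) (gdiff c M x y z (ufrom c M v x y q z))"
    using sde_vtop[OF sY paths(1) drifts(1,2), folded x_def] .
  moreover have "sde M W T y (ydrift c M x y z) z"
    using sde_vbot[OF sY paths(2) drifts(3), folded y_def z_def] by (simp add: z_def)
  ultimately show ?thesis
    using Lu Lx Ly Lz terminal unfolding mfgbcs_def by blast
qed

end

theorem theorem3p3:
  fixes c :: "('n::finite, 'k::finite, 'm::finite, 'p::finite) coef"
    and M :: "'a measure" and W :: "real \<Rightarrow> 'a \<Rightarrow> real" and T :: real
  assumes "T > 0"
    and "brownian M W"
    and "complete_measure M"
    and "coef_ok c T"
    and "\<forall>s\<in>{0..T}. invertible (cR c s) \<and> invertible (cR c s + cRb c s)"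
    and "bounded ((\<lambda>s. matrix_inv (cR c s)) ` {0..T})"
    and "bounded ((\<lambda>s. matrix_inv (cR c s + cRb c s)) ` {0..T})"
    and "\<exists>\<delta>>0. AE s in lborel. s \<in> {0..T} \<longrightarrow>
           (\<forall>\<xi>. \<delta> * (\<xi> \<bullet> \<xi>) \<le> \<xi> \<bullet> ((cD0 c s ** transpose (cD0 c s)) *v \<xi>)) \<and>
           (\<forall>\<xi>. \<delta> * (\<xi> \<bullet> \<xi>) \<le> \<xi> \<bullet> ((D0h c s ** transpose (D0h c s)) *v \<xi>))"
  shows
    "(\<forall>(u :: real \<Rightarrow> 'a \<Rightarrow> real^'k) (x :: real \<Rightarrow> 'a \<Rightarrow> real^'n)
        (y :: real \<Rightarrow> 'a \<Rightarrow> real^('p \<times> 'n)) (z :: real \<Rightarrow> 'a \<Rightarrow> real^('p \<times> 'n)).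
        L2F M (Fnat M W) T u \<and> L2FC M (Fnat M W) T x \<and> L2FC M (Fnat M W) T y
        \<and> L2F M (Fnat M W) T z \<and> mfgbcs c M W T u x y z \<longrightarrow>
        (let q = qfrom c M u x y z; v = u;
             Y = (\<lambda>s \<omega>. stack (x s \<omega>) (y s \<omega>));
             Z = (\<lambda>s \<omega>. stack (q s \<omega>) (z s \<omega>))
         in L2F M (Fnat M W) T v \<and> L2FC M (Fnat M W) T Y \<and> L2F M (Fnat M W) T Z
            \<and> bwd c M W T v Y Z))
   \<and>
     (\<forall>(v :: real \<Rightarrow> 'a \<Rightarrow> real^'k) (Y :: real \<Rightarrow> 'a \<Rightarrow> real^('n + ('p \<times> 'n)))
        (Z :: real \<Rightarrow> 'a \<Rightarrow> real^('n + ('p \<times> 'n))).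
        L2F M (Fnat M W) T v \<and> L2FC M (Fnat M W) T Y \<and> L2F M (Fnat M W) T Z
        \<and> bwd c M W T v Y Z \<longrightarrow>
        (let x = (\<lambda>s \<omega>. vtop (Y s \<omega>)); y = (\<lambda>s \<omega>. vbot (Y s \<omega>));
             q = (\<lambda>s \<omega>. vtop (Z s \<omega>)); z = (\<lambda>s \<omega>. vbot (Z s \<omega>));
             u = ufrom c M v x y q z
         in L2F M (Fnat M W) T u \<and> L2FC M (Fnat M W) T x \<and> L2FC M (Fnat M W) T y
            \<and> L2F M (Fnat M W) T z \<and> mfgbcs c M W T u x y z))"
proof -
  have W: "\<And>s. W s \<in> borel_measurable M" and "prob_space M"
    using assms(2) unfolding brownian_def by auto
  interpret mfgbcs_setting M W T c
    by (intro mfgbcs_setting.intro progressive_L2.intro gbcs_coefficients.intro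
        subalgebra_Fnat[OF W] \<open>prob_space M\<close> assms(1,4,6-8))
  show ?thesis
    unfolding Let_def
    by (intro conjI allI impI; elim conjE; simp add: mfgbcs_imp_bwd bwd_imp_mfgbcs)
qed

end
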